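(* Let $K \subseteq L \subseteq M$ be a tower of fields of characteristic $2$ such that $L/K$ is Galois with group $\mathbb{Z}/3$ and $M/L$ is Galois with group $\mathbb{Z}/2$. Let $\sigma$ generate $\mathrm{Gal}(L/K)$. For $\ell \in L$ let $\overline{\ell}$ denote its image in $L/(F-1)L$, where $F$ is the Frobenius map $x\mapsto x^2$ (so $(F-1)L = \{x^2 - x : x \in L\}$). Suppose $M \cong L[x]/(x^2 - x - a)$ with $a \in L$, and let $d$ be the dimension of the $\mathbb{F}_2$-subspace of $L/(F-1)L$ spanned by $\overline{a}, \overline{\sigma(a)}, \overline{\sigma^2(a)}$. If $N$ is the Galois closure of $M$ over $K$, then $\mathrm{Gal}(N/K)$ is isomorphic to a semidirect product $(\mathbb{Z}/2)^d \rtimes \mathbb{Z}/3$. *)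

theory Defs
  imports "HOL-Algebra.Algebra"
begin

(* All fields live inside an ambient field of type 'a (e.g. the Galois closure N). *)

definition is_subfield :: "'a::field set \<Rightarrow> bool" where
  "is_subfield S \<longleftrightarrow> 0 \<in> S \<and> 1 \<in> S \<and>
     (\<forall>x\<in>S. \<forall>y\<in>S. x + y \<in> S \<and> x * y \<in> S) \<and>
     (\<forall>x\<in>S. - x \<in> S \<and> inverse x \<in> S)"

definition fin_ext :: "'a::field set \<Rightarrow> 'a set \<Rightarrow> bool" where
  "fin_ext E F \<longleftrightarrow> is_subfield F \<and> is_subfield E \<and> F \<subseteq> E \<and>
     (\<exists>B. finite B \<and> B \<subseteq> E \<and>
        (\<forall>x\<in>E. \<exists>c. (\<forall>b\<in>B. c b \<in> F) \<and> x = (\<Sum>b\<in>B. c b * b)))"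

(* field automorphisms of E fixing F pointwise (identity outside E, for a canonical representative) *)
definition is_rel_aut :: "'a::field set \<Rightarrow> 'a set \<Rightarrow> ('a \<Rightarrow> 'a) \<Rightarrow> bool" where
  "is_rel_aut E F \<sigma> \<longleftrightarrow> bij_betw \<sigma> E E \<and>
     (\<forall>x\<in>E. \<forall>y\<in>E. \<sigma> (x + y) = \<sigma> x + \<sigma> y \<and> \<sigma> (x * y) = \<sigma> x * \<sigma> y) \<and>
     (\<forall>x\<in>F. \<sigma> x = x) \<and> (\<forall>x. x \<notin> E \<longrightarrow> \<sigma> x = x)"

definition Gal :: "'a::field set \<Rightarrow> 'a set \<Rightarrow> ('a \<Rightarrow> 'a) monoid" where
  "Gal E F = \<lparr>carrier = {\<sigma>. is_rel_aut E F \<sigma>}, monoid.mult = (\<lambda>\<sigma> \<tau>. \<sigma> \<circ> \<tau>), one = id\<rparr>"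

definition galois_ext :: "'a::field set \<Rightarrow> 'a set \<Rightarrow> bool" where
  "galois_ext E F \<longleftrightarrow> fin_ext E F \<and> {x \<in> E. \<forall>\<sigma>\<in>carrier (Gal E F). \<sigma> x = x} = F"

definition galois_closure :: "'a::field set \<Rightarrow> 'a set \<Rightarrow> 'a set \<Rightarrow> bool" where
  "galois_closure N M K \<longleftrightarrow> is_subfield M \<and> M \<subseteq> N \<and> galois_ext N K \<and>
     (\<forall>N'. is_subfield N' \<and> M \<subseteq> N' \<and> N' \<subseteq> N \<and> galois_ext N' K \<longrightarrow> N' = N)"

definition AS_sub :: "'a::field set \<Rightarrow> 'a set" where
  "AS_sub L = {x ^ 2 - x | x. x \<in> L}"

(* the classes of v i (i \<in> S) in L/(F-1)L are F_2-linearly independent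
   (F_2-linear combinations are subset sums) *)
definition AS_indep :: "'a::field set \<Rightarrow> (nat \<Rightarrow> 'a) \<Rightarrow> nat set \<Rightarrow> bool" where
  "AS_indep L v S \<longleftrightarrow> (\<forall>T\<subseteq>S. T \<noteq> {} \<longrightarrow> (\<Sum>i\<in>T. v i) \<notin> AS_sub L)"

(* F_2-dimension of the span of the classes of v i, i \<in> I, in L/(F-1)L *)
definition AS_rank :: "'a::field set \<Rightarrow> (nat \<Rightarrow> 'a) \<Rightarrow> nat set \<Rightarrow> nat" where
  "AS_rank L v I = Max {card S | S. S \<subseteq> I \<and> AS_indep L v S}"

definition semidirect :: "('g, 'b) monoid_scheme \<Rightarrow> 'g set \<Rightarrow> 'g set \<Rightarrow> bool" where
  "semidirect G H C \<longleftrightarrow> normal H G \<and> subgroup C G \<and> H \<inter> C = {\<one>\<^bsub>G\<^esub>} \<and>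
     H <#>\<^bsub>G\<^esub> C = carrier G"

end

theory Submission
  imports Defs
begin

(* Let \<tau> \<in> Gal(N/K) restrict to \<sigma> on L and put \<alpha>\<^sub>k = \<tau>\<^sup>k \<alpha>, a root of X^2 - X - \<sigma>\<^sup>k a.
   Then N = L(\<alpha>\<^sub>0, \<alpha>\<^sub>1, \<alpha>\<^sub>2), so r \<in> H = Gal(N/L) is determined by which \<alpha>\<^sub>k it moves to
   \<alpha>\<^sub>k + 1; this embeds H into (\<int>/2)^3, and H is elementary abelian.  Artin--Schreier duality
   identifies the image: for a set T of indices, \<Sum>i\<in>T. \<sigma>\<^sup>i a lies in (F - 1)L iff every r \<in> H
   moves an even number of the \<alpha>\<^sub>i with i \<in> T (this uses that the fixed field of H is L).
   Since \<sigma> permutes the classes of a, \<sigma> a, \<sigma>\<^sup>2 a cyclically, only three relation patterns can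
   occur, and in each the image of H, which is stable under the rotation induced by conjugation
   with \<tau>, is (\<int>/2)^d.  Finally \<tau>\<^sup>4 has order three and generates a complement of H. *)

lemma is_subfieldD:
  assumes "is_subfield S"
  shows "0 \<in> S" "1 \<in> S" "x \<in> S \<Longrightarrow> y \<in> S \<Longrightarrow> x + y \<in> S"
    "x \<in> S \<Longrightarrow> y \<in> S \<Longrightarrow> x * y \<in> S" "x \<in> S \<Longrightarrow> - x \<in> S" "x \<in> S \<Longrightarrow> inverse x \<in> S"
  using assms unfolding is_subfield_def by auto

lemma subfield_diff: "is_subfield S \<Longrightarrow> x \<in> S \<Longrightarrow> y \<in> S \<Longrightarrow> x - y \<in> S"
  by (metis diff_conv_add_uminus is_subfieldD(3,5))

lemma subfield_divide: "is_subfield S \<Longrightarrow> x \<in> S \<Longrightarrow> y \<in> S \<Longrightarrow> x / y \<in> S"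
  by (metis divide_inverse is_subfieldD(4,6))

lemma subfield_power: "is_subfield S \<Longrightarrow> x \<in> S \<Longrightarrow> x ^ n \<in> S"
  by (induction n) (auto intro: is_subfieldD)

lemma subfield_sum: "is_subfield S \<Longrightarrow> (\<And>i. i \<in> I \<Longrightarrow> f i \<in> S) \<Longrightarrow> sum f I \<in> S"
  by (induction I rule: infinite_finite_induct) (auto intro: is_subfieldD)

lemmas subfield_closed = is_subfieldD(1-4) subfield_diff subfield_divide subfield_power

lemma is_rel_autD:
  assumes "is_rel_aut E F s"
  shows "bij_betw s E E" "x \<in> E \<Longrightarrow> y \<in> E \<Longrightarrow> s (x + y) = s x + s y"
    "x \<in> E \<Longrightarrow> y \<in> E \<Longrightarrow> s (x * y) = s x * s y" "x \<in> F \<Longrightarrow> s x = x"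
    "x \<notin> E \<Longrightarrow> s x = x"
  using assms unfolding is_rel_aut_def by auto

lemma rel_aut_in: "is_rel_aut E F s \<Longrightarrow> x \<in> E \<Longrightarrow> s x \<in> E"
  using is_rel_autD(1) bij_betwE by blast

lemma rel_aut_inj: "is_rel_aut E F s \<Longrightarrow> x \<in> E \<Longrightarrow> y \<in> E \<Longrightarrow> s x = s y \<Longrightarrow> x = y"
  using is_rel_autD(1) bij_betw_imp_inj_on inj_onD by metis

context
  fixes E F :: "'a::field set" and s :: "'a \<Rightarrow> 'a"
  assumes E: "is_subfield E" and s: "is_rel_aut E F s"
begin

lemma rel_aut_add: "x \<in> E \<Longrightarrow> y \<in> E \<Longrightarrow> s (x + y) = s x + s y"
  and rel_aut_mult: "x \<in> E \<Longrightarrow> y \<in> E \<Longrightarrow> s (x * y) = s x * s y"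
  using is_rel_autD(2,3)[OF s] by auto

lemma rel_aut_zero: "s 0 = 0"
proof -
  have "s 0 + 0 = s 0 + s 0" using is_rel_autD(2)[OF s, of 0 0] is_subfieldD(1)[OF E] by simp
  then show ?thesis by (metis add_left_cancel)
qed

lemma rel_aut_one: "s 1 = 1"
proof -
  have "s 1 = s 1 * s 1" using is_rel_autD(3)[OF s, of 1 1] is_subfieldD(2)[OF E] by simp
  moreover have "s 1 \<noteq> 0"
    using rel_aut_inj[OF s, of 1 0] rel_aut_zero is_subfieldD(1,2)[OF E] by auto
  ultimately show ?thesis by (metis mult.right_neutral mult_left_cancel)
qed

lemma rel_aut_minus: "x \<in> E \<Longrightarrow> s (- x) = - s x"
  using is_rel_autD(2)[OF s, of x "-x"] rel_aut_zero is_subfieldD(5)[OF E, of x]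
  by (simp add: eq_neg_iff_add_eq_0 add.commute)

lemma rel_aut_diff: "x \<in> E \<Longrightarrow> y \<in> E \<Longrightarrow> s (x - y) = s x - s y"
  using is_rel_autD(2)[OF s, of x "-y"] rel_aut_minus[of y] is_subfieldD(5)[OF E, of y] by simp

lemma rel_aut_power: "x \<in> E \<Longrightarrow> s (x ^ n) = s x ^ n"
  by (induction n) (auto simp: rel_aut_one is_rel_autD(3)[OF s] subfield_power[OF E])

lemma rel_aut_sum: "(\<And>i. i \<in> I \<Longrightarrow> f i \<in> E) \<Longrightarrow> s (sum f I) = (\<Sum>i\<in>I. s (f i))"
  by (induction I rule: infinite_finite_induct)
    (auto simp: rel_aut_zero is_rel_autD(2)[OF s] subfield_sum[OF E])

end

lemmas rel_aut_hom = rel_aut_add rel_aut_mult rel_aut_zero rel_aut_one rel_aut_diff rel_aut_power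

lemma rel_aut_comp:
  assumes s: "is_rel_aut E F s" and t: "is_rel_aut E F t"
  shows "is_rel_aut E F (s \<circ> t)"
  unfolding is_rel_aut_def
proof (intro conjI ballI allI impI)
  show "bij_betw (s \<circ> t) E E"
    using bij_betw_trans is_rel_autD(1)[OF s] is_rel_autD(1)[OF t] by blast
  fix x y assume x: "x \<in> E" and y: "y \<in> E"
  show "(s \<circ> t) (x + y) = (s \<circ> t) x + (s \<circ> t) y" "(s \<circ> t) (x * y) = (s \<circ> t) x * (s \<circ> t) y"
    using is_rel_autD(2,3)[OF t x y] is_rel_autD(2,3)[OF s rel_aut_in[OF t x] rel_aut_in[OF t y]]
    by simp_all
qed (use is_rel_autD(4,5)[OF s] is_rel_autD(4,5)[OF t] in simp_all)

definition aut_inv :: "'a set \<Rightarrow> ('a \<Rightarrow> 'a) \<Rightarrow> 'a \<Rightarrow> 'a" where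
  "aut_inv E s = (\<lambda>x. if x \<in> E then inv_into E s x else x)"

lemma aut_inv_right: "is_rel_aut E F s \<Longrightarrow> x \<in> E \<Longrightarrow> s (aut_inv E s x) = x"
  by (simp add: aut_inv_def bij_betw_inv_into_right[OF is_rel_autD(1)])

lemma aut_inv_left: "is_rel_aut E F s \<Longrightarrow> aut_inv E s (s x) = x"
  using is_rel_autD(1,5)[of E F s] rel_aut_in[of E F s x]
  by (cases "x \<in> E") (simp_all add: aut_inv_def bij_betw_inv_into_left)

lemma aut_inv_in: "is_rel_aut E F s \<Longrightarrow> x \<in> E \<Longrightarrow> aut_inv E s x \<in> E"
  by (simp add: aut_inv_def bij_betwE[OF bij_betw_inv_into[OF is_rel_autD(1)]])

lemma rel_aut_aut_inv:
  assumes E: "is_subfield E" and FE: "F \<subseteq> E" and s: "is_rel_aut E F s"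
  shows "is_rel_aut E F (aut_inv E s)"
  unfolding is_rel_aut_def
proof (intro conjI ballI allI impI)
  show "bij_betw (aut_inv E s) E E"
    using bij_betw_inv_into[OF is_rel_autD(1)[OF s]]
    by (rule bij_betw_cong[THEN iffD1, rotated]) (simp add: aut_inv_def)
  fix x y assume x: "x \<in> E" and y: "y \<in> E"
  note inv = aut_inv_in[OF s] aut_inv_right[OF s]
  have "aut_inv E s (x + y) = aut_inv E s (s (aut_inv E s x + aut_inv E s y))"
    using is_rel_autD(2)[OF s inv(1)[OF x] inv(1)[OF y]] inv(2)[OF x] inv(2)[OF y] by simp
  then show "aut_inv E s (x + y) = aut_inv E s x + aut_inv E s y" by (simp add: aut_inv_left[OF s])
  have "aut_inv E s (x * y) = aut_inv E s (s (aut_inv E s x * aut_inv E s y))"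
    using is_rel_autD(3)[OF s inv(1)[OF x] inv(1)[OF y]] inv(2)[OF x] inv(2)[OF y] by simp
  then show "aut_inv E s (x * y) = aut_inv E s x * aut_inv E s y" by (simp add: aut_inv_left[OF s])
next
  fix x assume "x \<in> F"
  then show "aut_inv E s x = x" using aut_inv_left[OF s, of x] is_rel_autD(4)[OF s] by simp
qed (simp add: aut_inv_def)

lemma Gal_carrier: "s \<in> carrier (Gal E F) \<longleftrightarrow> is_rel_aut E F s"
  by (simp add: Gal_def)

lemma Gal_mult [simp]: "s \<otimes>\<^bsub>Gal E F\<^esub> t = s \<circ> t"
  by (simp add: Gal_def)

lemma Gal_one [simp]: "\<one>\<^bsub>Gal E F\<^esub> = id"
  by (simp add: Gal_def)

lemma Gal_pow [simp]: "s [^]\<^bsub>Gal E F\<^esub> (n::nat) = s ^^ n"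
proof (induction n)
  case (Suc n)
  have "s [^]\<^bsub>Gal E F\<^esub> Suc n = (s [^]\<^bsub>Gal E F\<^esub> n) \<circ> s" by (simp add: Gal_def)
  then show ?case using Suc by (simp only: funpow_Suc_right)
qed (simp add: Gal_def)

lemma group_Gal:
  assumes E: "is_subfield E" and FE: "F \<subseteq> E"
  shows "group (Gal E F)"
proof (rule groupI)
  fix x assume "x \<in> carrier (Gal E F)"
  then have x: "is_rel_aut E F x" by (simp add: Gal_carrier)
  show "\<exists>y\<in>carrier (Gal E F). y \<otimes>\<^bsub>Gal E F\<^esub> x = \<one>\<^bsub>Gal E F\<^esub>"
  proof
    show "aut_inv E x \<in> carrier (Gal E F)"
      using rel_aut_aut_inv[OF E FE x] by (simp add: Gal_carrier)
    show "aut_inv E x \<otimes>\<^bsub>Gal E F\<^esub> x = \<one>\<^bsub>Gal E F\<^esub>" by (simp add: fun_eq_iff aut_inv_left[OF x])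
  qed
qed (simp_all add: Gal_carrier rel_aut_comp o_assoc, simp add: is_rel_aut_def)

lemma Gal_inv: "is_subfield E \<Longrightarrow> F \<subseteq> E \<Longrightarrow> s \<in> carrier (Gal E F) \<Longrightarrow> inv\<^bsub>Gal E F\<^esub> s = aut_inv E s"
  by (rule group.inv_equality[OF group_Gal])
    (auto simp: Gal_carrier fun_eq_iff aut_inv_left rel_aut_aut_inv)

definition restrict_aut :: "'a set \<Rightarrow> ('a \<Rightarrow> 'a) \<Rightarrow> 'a \<Rightarrow> 'a" where
  "restrict_aut E g = (\<lambda>x. if x \<in> E then g x else x)"

lemma rel_aut_restrict:
  assumes g: "is_rel_aut N K g" and E: "is_subfield E" and KE: "K \<subseteq> E" and EN: "E \<subseteq> N"
    and gE: "\<And>x. x \<in> E \<Longrightarrow> g x \<in> E" and g'E: "\<And>x. x \<in> E \<Longrightarrow> aut_inv N g x \<in> E"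
  shows "is_rel_aut E K (restrict_aut E g)"
  unfolding is_rel_aut_def
proof (intro conjI ballI allI impI)
  show "bij_betw (restrict_aut E g) E E"
  proof (rule bij_betw_imageI)
    show "inj_on (restrict_aut E g) E"
      using rel_aut_inj[OF g] EN by (auto simp: restrict_aut_def inj_on_def)
    show "restrict_aut E g ` E = E"
      using gE g'E aut_inv_right[OF g] EN by (force simp: restrict_aut_def)
  qed
  fix x y assume "x \<in> E" "y \<in> E"
  then show "restrict_aut E g (x + y) = restrict_aut E g x + restrict_aut E g y"
    "restrict_aut E g (x * y) = restrict_aut E g x * restrict_aut E g y"
    using is_rel_autD(2,3)[OF g] EN is_subfieldD(3,4)[OF E]
    by (auto simp: restrict_aut_def subset_iff)
qed (use KE is_rel_autD(4)[OF g] in \<open>auto simp: restrict_aut_def\<close>)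

section \<open>Artin--Schreier extensions in characteristic two\<close>

lemma char2_add_self: "(2::'a::field) = 0 \<Longrightarrow> (x::'a) + x = 0"
  by (metis mult_2 mult_zero_left)

lemma char2_diff: "(2::'a::field) = 0 \<Longrightarrow> (x::'a) - y = x + y"
  by (metis char2_add_self add_eq_0_iff diff_conv_add_uminus)

lemma AS_root_cases:
  assumes "(2::'a::field) = 0" and "(y::'a) ^ 2 - y = z ^ 2 - z"
  shows "y = z \<or> y = z + 1"
proof -
  have "(y - z) * (y + z - 1) = 0" using assms(2) by (simp add: algebra_simps power2_eq_square)
  then have "y = z \<or> y = 1 - z" by (simp add: eq_diff_eq)
  then show ?thesis using char2_diff[OF assms(1), of 1 z] by (auto simp: add.commute)
qed

lemma char2_square_sum:
  assumes "(2::'a::field) = 0"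
  shows "(\<Sum>i\<in>T. (x i :: 'a)) ^ 2 = (\<Sum>i\<in>T. x i ^ 2)"
proof (induction T rule: infinite_finite_induct)
  case (insert j F)
  have "(x j + sum x F) ^ 2 = x j ^ 2 + (sum x F) ^ 2 + 2 * x j * sum x F"
    by (simp add: power2_eq_square algebra_simps)
  then show ?case using insert assms by simp
qed simp_all

lemma char2_indicator_sum:
  assumes "(2::'a::field) = 0" and "finite T"
  shows "(\<Sum>i\<in>T. (if b i then 1 else 0 :: 'a)) = (if odd (card {i\<in>T. b i}) then 1 else 0)"
  using assms(2)
proof (induction T rule: finite_induct)
  case (insert j F)
  have "card {i \<in> insert j F. b i} = card {i \<in> F. b i} + (if b j then 1 else 0)"
  proof (cases "b j")
    case True
    then have "{i \<in> insert j F. b i} = insert j {i \<in> F. b i}" by auto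
    then show ?thesis using True insert by simp
  next
    case False
    then have "{i \<in> insert j F. b i} = {i \<in> F. b i}" by auto
    then show ?thesis using False by simp
  qed
  moreover have "(1::'a) + 1 = 0" using assms(1) by simp
  ultimately show ?case using insert by (auto simp: add.commute)
qed simp

lemma AS_sub_add:
  assumes "(2::'a::field) = 0" and L: "is_subfield L" and "x \<in> AS_sub L" "(v::'a) \<in> AS_sub L"
  shows "x + v \<in> AS_sub L"
proof -
  obtain y w where y: "y \<in> L" "x = y ^ 2 - y" and w: "w \<in> L" "v = w ^ 2 - w"
    using assms(3,4) by (auto simp: AS_sub_def)
  have "x + v = (y + w) ^ 2 - (y + w) - 2 * y * w"
    by (simp add: y(2) w(2) power2_eq_square algebra_simps)
  then have "x + v = (y + w) ^ 2 - (y + w)" using assms(1) by simp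
  then show ?thesis using y(1) w(1) is_subfieldD(3)[OF L] by (auto simp: AS_sub_def)
qed

lemma AS_sub_rel_aut:
  assumes L: "is_subfield L" and s: "is_rel_aut L K s" and x: "x \<in> AS_sub L"
  shows "s x \<in> AS_sub L"
proof -
  obtain y where y: "y \<in> L" "x = y ^ 2 - y" using x by (auto simp: AS_sub_def)
  have "s x = s y ^ 2 - s y"
    using y by (simp add: rel_aut_diff[OF L s] rel_aut_power[OF L s] subfield_power[OF L])
  then show ?thesis using rel_aut_in[OF s y(1)] by (auto simp: AS_sub_def)
qed

definition adjoin :: "'a::field set \<Rightarrow> 'a \<Rightarrow> 'a set" where
  "adjoin E b = {e + f * b | e f. e \<in> E \<and> f \<in> E}"

lemma adjoinI: "e \<in> E \<Longrightarrow> f \<in> E \<Longrightarrow> e + f * b \<in> adjoin E b"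
  unfolding adjoin_def by blast

lemma adjoinE: "x \<in> adjoin E b \<Longrightarrow> (\<And>e f. e \<in> E \<Longrightarrow> f \<in> E \<Longrightarrow> x = e + f * b \<Longrightarrow> P) \<Longrightarrow> P"
  unfolding adjoin_def by blast

lemma subset_adjoin: "is_subfield E \<Longrightarrow> E \<subseteq> adjoin E b"
  using adjoinI[of _ E 0 b] is_subfieldD(1) by fastforce

lemma generator_in_adjoin: "is_subfield E \<Longrightarrow> b \<in> adjoin E b"
  using adjoinI[of 0 E 1 b] is_subfieldD(1,2) by fastforce

lemma adjoin_subset: "is_subfield S \<Longrightarrow> E \<subseteq> S \<Longrightarrow> b \<in> S \<Longrightarrow> adjoin E b \<subseteq> S"
  by (auto elim!: adjoinE intro!: is_subfieldD(3,4))

lemma adjoin_mult: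
  assumes E: "is_subfield E" and AS: "b ^ 2 - b \<in> E" and x: "x \<in> adjoin E b" and y: "y \<in> adjoin E b"
  shows "x * y \<in> adjoin E b"
proof -
  obtain e f e' f' where ef: "e \<in> E" "f \<in> E" "e' \<in> E" "f' \<in> E"
    and xy: "x = e + f * b" "y = e' + f' * b" using x y by (elim adjoinE)
  have "x * y = (e * e' + f * f' * (b ^ 2 - b)) + (e * f' + f * e' + f * f') * b"
    unfolding xy by (simp add: algebra_simps power2_eq_square)
  moreover have "e * e' + f * f' * (b ^ 2 - b) \<in> E" "e * f' + f * e' + f * f' \<in> E"
    using ef AS by (simp_all add: is_subfieldD(3,4)[OF E])
  ultimately show ?thesis using adjoinI by metis
qed

lemma adjoin_inverse:
  assumes char2: "(2::'a::field) = 0" and E: "is_subfield E" and AS: "b ^ 2 - b \<in> E"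
    and x: "(x::'a) \<in> adjoin E b"
  shows "inverse x \<in> adjoin E b"
proof -
  obtain e f where e: "e \<in> E" and f: "f \<in> E" and x: "x = e + f * b" using x by (rule adjoinE)
  define n where "n = e * e + e * f + f * f * (b ^ 2 - b)"
  have n: "n \<in> E" unfolding n_def using e f AS by (simp add: is_subfieldD(3,4)[OF E])
  \<comment> \<open>\<open>(e + f) + f b\<close> is the conjugate of \<open>x\<close> under \<open>b \<mapsto> b + 1\<close>, and \<open>n\<close> is the norm\<close>
  have norm: "x * ((e + f) + f * b) = n"
  proof -
    have "x * ((e + f) + f * b) = e * e + e * f + (e * f + e * f) * b + f * f * (b * b + b)"
      unfolding x by (simp add: algebra_simps)
    also have "e * f + e * f = 0" using char2_add_self[OF char2] .
    also have "b * b + b = b ^ 2 - b" using char2_diff[OF char2] by (simp add: power2_eq_square)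
    finally show ?thesis by (simp add: n_def)
  qed
  show ?thesis
  proof (cases "n = 0")
    case False
    have "x * (((e + f) + f * b) / n) = 1" using norm False by (simp add: times_divide_eq_right)
    then have "inverse x = (e + f) / n + (f / n) * b"
      by (simp add: inverse_unique add_divide_distrib)
    moreover have "(e + f) / n \<in> E" "f / n \<in> E"
      using e f n by (simp_all add: is_subfieldD(3)[OF E] subfield_divide[OF E])
    ultimately show ?thesis using adjoinI by metis
  next
    case True
    show ?thesis
    proof (cases "f = 0")
      case True
      then show ?thesis using x e subset_adjoin[OF E] is_subfieldD(6)[OF E] by auto
    next
      case False
      from \<open>n = 0\<close> have "x = 0 \<or> (e + f) + f * b = 0" using norm by simp
      moreover have "b \<in> E" if "(e + f) + f * b = 0"
      proof -
        have "b = - (e + f) / f" using that False by (simp add: field_simps add_eq_0_iff)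
        then show ?thesis using e f by (simp only: subfield_divide[OF E] is_subfieldD(3,5)[OF E])
      qed
      ultimately show ?thesis
        using x e f subset_adjoin[OF E] is_subfieldD(1,3,4,6)[OF E] by fastforce
    qed
  qed
qed

lemma subfield_adjoin:
  assumes char2: "(2::'a::field) = 0" and E: "is_subfield E" and AS: "b ^ 2 - b \<in> E"
  shows "is_subfield (adjoin E (b::'a))"
  unfolding is_subfield_def
proof (intro conjI ballI)
  show "0 \<in> adjoin E b" "1 \<in> adjoin E b" using subset_adjoin[OF E] is_subfieldD(1,2)[OF E] by auto
  fix x assume x: "x \<in> adjoin E b"
  show "inverse x \<in> adjoin E b" by (rule adjoin_inverse[OF char2 E AS x])
  obtain e f where e: "e \<in> E" and f: "f \<in> E" and x': "x = e + f * b" using x by (rule adjoinE)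
  show "- x \<in> adjoin E b" using adjoinI[of "-e" E "-f" b] e f x' is_subfieldD(5)[OF E] by simp
  fix y assume y: "y \<in> adjoin E b"
  show "x * y \<in> adjoin E b" by (rule adjoin_mult[OF E AS x y])
  obtain e' f' where e': "e' \<in> E" and f': "f' \<in> E" and y': "y = e' + f' * b"
    using y by (rule adjoinE)
  show "x + y \<in> adjoin E b" using adjoinI[of "e + e'" E "f + f'" b] e f e' f' is_subfieldD(3)[OF E]
    by (simp add: x' y' algebra_simps)
qed

lemma fin_ext_of_spanning:
  assumes F: "is_subfield F" and E: "is_subfield E" and FE: "F \<subseteq> E"
    and I: "finite I" and vE: "v ` I \<subseteq> E"
    and span: "\<And>x. x \<in> E \<Longrightarrow> \<exists>c. (\<forall>i\<in>I. c i \<in> F) \<and> x = (\<Sum>i\<in>I. c i * v i)"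
  shows "fin_ext E F"
  unfolding fin_ext_def
proof (intro conjI F E FE exI[of _ "v ` I"] ballI)
  show "finite (v ` I)" using I by simp
  fix x assume "x \<in> E"
  then obtain c where c: "\<forall>i\<in>I. c i \<in> F" and x: "x = (\<Sum>i\<in>I. c i * v i)" using span by blast
  define c' where "c' = (\<lambda>y. \<Sum>i\<in>{i\<in>I. v i = y}. c i)"
  have "x = (\<Sum>y\<in>v ` I. \<Sum>i\<in>{i\<in>I. v i = y}. c i * v i)"
    unfolding x using sum.image_gen[OF I, of "\<lambda>i. c i * v i" v] .
  also have "\<dots> = (\<Sum>y\<in>v ` I. c' y * y)"
    unfolding c'_def sum_distrib_right by (intro sum.cong) auto
  moreover have "\<forall>y\<in>v ` I. c' y \<in> F" unfolding c'_def using c by (auto intro!: subfield_sum[OF F])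
  ultimately show "\<exists>c. (\<forall>b\<in>v ` I. c b \<in> F) \<and> x = (\<Sum>b\<in>v ` I. c b * b)" by blast
qed (use vE in simp)

lemma fin_ext_adjoin:
  assumes char2: "(2::'a::field) = 0" and EK: "fin_ext E K" and c: "b ^ 2 - b \<in> E"
  shows "fin_ext (adjoin E (b::'a)) K"
proof -
  have K: "is_subfield K" and E: "is_subfield E" and KE: "K \<subseteq> E"
    using EK by (auto simp: fin_ext_def)
  obtain B where B: "finite B" "B \<subseteq> E" and span: "\<forall>x\<in>E. \<exists>c. (\<forall>y\<in>B. c y \<in> K) \<and> x = (\<Sum>y\<in>B. c y * y)"
    using EK unfolding fin_ext_def by blast
  \<comment> \<open>the products \<open>y\<close> and \<open>y b\<close>, \<open>y \<in> B\<close>, span \<open>adjoin E b\<close> over \<open>K\<close>\<close>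
  define v where "v = (\<lambda>(y, t). y * (if t then b else 1))"
  show ?thesis
  proof (rule fin_ext_of_spanning[OF K subfield_adjoin[OF char2 E c]])
    show "K \<subseteq> adjoin E b" using KE subset_adjoin[OF E] by blast
    show "finite (B \<times> (UNIV::bool set))" using B by simp
    have "y \<in> adjoin E b" "y * b \<in> adjoin E b" if "y \<in> B" for y
      using that B(2) subset_adjoin[OF E] adjoinI[of 0 E y b] is_subfieldD(1)[OF E] by auto
    then show "v ` (B \<times> UNIV) \<subseteq> adjoin E b" by (auto simp: v_def)
    fix x assume "x \<in> adjoin E b"
    then obtain e f where e: "e \<in> E" and f: "f \<in> E" and x: "x = e + f * b" by (rule adjoinE)
    obtain c where c: "\<forall>y\<in>B. c y \<in> K" "e = (\<Sum>y\<in>B. c y * y)" using span e by blast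
    obtain c' where c': "\<forall>y\<in>B. c' y \<in> K" "f = (\<Sum>y\<in>B. c' y * y)" using span f by blast
    define d where "d = (\<lambda>(y, t). if t then c' y else c y)"
    have "(\<Sum>p\<in>B \<times> UNIV. d p * v p) = (\<Sum>y\<in>B. \<Sum>t\<in>UNIV. d (y, t) * v (y, t))"
      by (simp add: sum.cartesian_product case_prod_unfold)
    also have "\<dots> = (\<Sum>y\<in>B. c y * y + c' y * y * b)"
      unfolding UNIV_bool d_def v_def by (simp add: mult.assoc)
    also have "\<dots> = x" unfolding x c(2) c'(2) by (simp only: sum.distrib sum_distrib_right)
    finally show "\<exists>d. (\<forall>p\<in>B \<times> UNIV. d p \<in> K) \<and> x = (\<Sum>p\<in>B \<times> UNIV. d p * v p)"
      using c(1) c'(1) by (intro exI[of _ d]) (auto simp: d_def)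
  qed
qed

lemma AS_rank_eqI:
  assumes I: "finite I" and S: "S \<subseteq> I" "AS_indep L v S" "card S = m"
    and bound: "\<And>S. S \<subseteq> I \<Longrightarrow> AS_indep L v S \<Longrightarrow> card S \<le> m"
  shows "AS_rank L v I = m"
  unfolding AS_rank_def
proof (rule Max_eqI)
  show "finite {card S |S. S \<subseteq> I \<and> AS_indep L v S}"
    by (rule finite_subset[of _ "card ` Pow I"]) (use I in auto)
qed (use S bound in auto)

lemma odd_card_filter_insert:
  assumes "finite S" "j \<notin> S"
  shows "odd (card {i \<in> insert j S. P i}) \<longleftrightarrow> P j \<noteq> odd (card {i \<in> S. P i})"
proof -
  have "{i \<in> insert j S. P i} = (if P j then insert j {i \<in> S. P i} else {i \<in> S. P i})" by auto
  then show ?thesis using assms by simp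
qed

lemma subsets_of_three:
  assumes "S \<subseteq> {0, 1, 2::nat}"
  shows "S \<in> {{}, {0}, {1}, {2}, {0, 1}, {0, 2}, {1, 2}, {0, 1, 2}}"
proof -
  have S: "S = (if 0 \<in> S then {0} else {}) \<union> (if 1 \<in> S then {1} else {}) \<union> (if 2 \<in> S then {2} else {})"
    using assms by auto
  show ?thesis
    by (subst S, cases "0 \<in> S"; cases "1 \<in> S"; cases "2 \<in> S") (simp_all add: insert_commute)
qed

lemma less_3_cases: "k < 3 \<Longrightarrow> k = 0 \<or> k = 1 \<or> k = (2::nat)"
  by auto

lemma odd_card_filter_singleton: "odd (card {i \<in> {j}. P i}) \<longleftrightarrow> P j"
  using odd_card_filter_insert[of "{}" j P] by auto

lemma odd_card_filter_pair: "j \<noteq> k \<Longrightarrow> odd (card {i \<in> {j, k}. P i}) \<longleftrightarrow> P j \<noteq> P k"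
  using odd_card_filter_insert[of "{k}" j P] odd_card_filter_insert[of "{}" k P] by auto

lemma odd_card_filter_012:
  "odd (card {i \<in> {0, 1, 2::nat}. P i}) \<longleftrightarrow> (P 0 \<noteq> P 1) \<noteq> P 2"
  using odd_card_filter_insert[of "{1, 2}" 0 P] odd_card_filter_pair[of 1 2 P] by auto

lemma funpow_mod:
  assumes "f ^^ n = id"
  shows "f ^^ k = f ^^ (k mod n)"
proof -
  have "f ^^ k = f ^^ (n * (k div n) + k mod n)" by simp
  also have "\<dots> = (f ^^ n) ^^ (k div n) \<circ> f ^^ (k mod n)" by (simp only: funpow_add funpow_mult)
  finally show ?thesis using assms by simp
qed

lemma (in group) nat_pow_mod:
  assumes x: "x \<in> carrier G" and n: "x [^] n = \<one>"
  shows "x [^] (k::nat) = x [^] (k mod n)"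
proof -
  have "x [^] k = x [^] (n * (k div n) + k mod n)" by simp
  also have "\<dots> = (x [^] n) [^] (k div n) \<otimes> x [^] (k mod n)"
    using x by (simp add: nat_pow_mult nat_pow_pow)
  finally show ?thesis using x n by simp
qed

lemma (in group) subgroup_powers:
  assumes x: "x \<in> carrier G" and n: "0 < n" "x [^] n = \<one>"
  shows "subgroup ((\<lambda>k::nat. x [^] k) ` {..<n}) G" (is "subgroup ?C G")
proof (rule subgroupI)
  have mem: "x [^] k \<in> ?C" for k :: nat
    using nat_pow_mod[OF x n(2), of k] n(1) by simp
  show "?C \<subseteq> carrier G" using x by auto
  show "?C \<noteq> {}" using mem by blast
  fix y z assume "y \<in> ?C" "z \<in> ?C"
  then obtain i j :: nat where i: "y = x [^] i" "i < n" and j: "z = x [^] j" by auto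
  show "y \<otimes> z \<in> ?C" using mem[of "i + j"] x by (simp add: i j nat_pow_mult)
  have "x [^] (n - i) \<otimes> x [^] i = \<one>" using i(2) x n(2) by (simp add: nat_pow_mult)
  then have "inv y = x [^] (n - i)" unfolding i(1) by (rule inv_equality) (use x in simp_all)
  then show "inv y \<in> ?C" using mem by simp
qed

lemma (in group) powers_iso_integer_mod_group:
  assumes x: "x \<in> carrier G" and n: "0 < n" "x [^] n = \<one>" and inj: "inj_on (\<lambda>k::nat. x [^] k) {..<n}"
  shows "subgroup_generated G ((\<lambda>k::nat. x [^] k) ` {..<n}) \<cong> integer_mod_group n"
    (is "subgroup_generated G ?C \<cong> _")
proof -
  have car: "carrier (subgroup_generated G ?C) = ?C"
    by (rule subgroup.carrier_subgroup_generated_subgroup[OF subgroup_powers[OF x n]])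
  define \<psi> where "\<psi> = (\<lambda>k::int. x [^] nat k)"
  have "\<psi> \<in> iso (integer_mod_group n) (subgroup_generated G ?C)"
  proof (rule isoI)
    show "\<psi> \<in> hom (integer_mod_group n) (subgroup_generated G ?C)"
    proof (rule homI)
      fix a b assume "a \<in> carrier (integer_mod_group n)" "b \<in> carrier (integer_mod_group n)"
      then have "nat ((a + b) mod int n) = (nat a + nat b) mod n"
        using n(1) by (simp add: carrier_integer_mod_group nat_mod_distrib nat_add_distrib)
      then show "\<psi> (a \<otimes>\<^bsub>integer_mod_group n\<^esub> b) = \<psi> a \<otimes>\<^bsub>subgroup_generated G ?C\<^esub> \<psi> b"
        using nat_pow_mod[OF x n(2), of "nat a + nat b"] x by (simp add: \<psi>_def nat_pow_mult)
    next
      fix a assume "a \<in> carrier (integer_mod_group n)"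
      then have "nat a \<in> {..<n}" using n(1) by (auto simp: carrier_integer_mod_group)
      then show "\<psi> a \<in> carrier (subgroup_generated G ?C)" unfolding car \<psi>_def by (rule imageI)
    qed
    have "bij_betw nat {0..<int n} {..<n}"
      by (rule bij_betw_byWitness[of _ int]) auto
    from bij_betw_trans[OF this inj_on_imp_bij_betw[OF inj]]
    show "bij_betw \<psi> (carrier (integer_mod_group n)) (carrier (subgroup_generated G ?C))"
      using n(1) by (simp add: car carrier_integer_mod_group \<psi>_def o_def)
  qed
  then have "integer_mod_group n \<cong> subgroup_generated G ?C" by (rule is_isoI)
  then show ?thesis by (rule group.iso_sym[OF group_integer_mod_group])
qed

locale AS_tower =
  fixes K L M N :: "'a::field set" and \<sigma> :: "'a \<Rightarrow> 'a" and a :: 'a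
  assumes char2: "(2::'a) = 0"
    and KL: "galois_ext L K" and GLK: "Gal L K \<cong> integer_mod_group 3"
    and LM: "galois_ext M L" and GML: "Gal M L \<cong> integer_mod_group 2"
    and sigma: "\<sigma> \<in> carrier (Gal L K)"
    and sigma_gen: "generate (Gal L K) {\<sigma>} = carrier (Gal L K)"
    and aL: "a \<in> L"
    and Ma: "\<exists>\<alpha>\<in>M. \<alpha> ^ 2 - \<alpha> = a \<and> M = {l + m * \<alpha> | l m. l \<in> L \<and> m \<in> L}"
    and N: "galois_closure N M K"
begin

abbreviation G where "G \<equiv> Gal N K"

lemma subfield_L: "is_subfield L" and subfield_N: "is_subfield N"
  and K_sub_L: "K \<subseteq> L" and L_sub_M: "L \<subseteq> M" and M_sub_N: "M \<subseteq> N"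
  using KL LM N by (auto simp: galois_ext_def fin_ext_def galois_closure_def)

lemma L_sub_N: "L \<subseteq> N" and K_sub_N: "K \<subseteq> N"
  using K_sub_L L_sub_M M_sub_N by auto

lemmas L_closed = subfield_closed[OF subfield_L]
lemmas N_closed = subfield_closed[OF subfield_N]

lemma group_G: "group G"
  by (rule group_Gal[OF subfield_N K_sub_N])

lemma group_Gal_L: "group (Gal L K)"
  by (rule group_Gal[OF subfield_L K_sub_L])

lemma fixed_by_G_in_K: "x \<in> N \<Longrightarrow> (\<And>g. g \<in> carrier G \<Longrightarrow> g x = x) \<Longrightarrow> x \<in> K"
  using N unfolding galois_closure_def galois_ext_def by blast

lemma card_Gal_L: "card (carrier (Gal L K)) = 3"
  using iso_same_card[OF GLK] by (simp add: carrier_integer_mod_group)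

lemma sigma_pow_three: "\<sigma> ^^ 3 = id"
  using group.pow_order_eq_1[OF group_Gal_L sigma] card_Gal_L by (simp add: order_def)

lemma sigma_pow_mod: "\<sigma> ^^ k = \<sigma> ^^ (k mod 3)"
  by (rule funpow_mod[OF sigma_pow_three])

lemma carrier_Gal_L_powers: "carrier (Gal L K) = (\<lambda>k. \<sigma> ^^ k) ` {..<3}"
proof -
  have "finite (carrier (Gal L K))" using card_Gal_L card.infinite by fastforce
  then have "carrier (Gal L K) = range (\<lambda>k::nat. \<sigma> ^^ k)"
    using group.generate_pow_on_finite_carrier[OF group_Gal_L _ sigma] sigma_gen by auto
  also have "\<dots> = (\<lambda>k. \<sigma> ^^ k) ` {..<3}"
  proof (intro equalityI subsetI)
    fix s assume "s \<in> range (\<lambda>k::nat. \<sigma> ^^ k)"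
    then obtain k where "s = \<sigma> ^^ (k mod 3)" using sigma_pow_mod by auto
    then show "s \<in> (\<lambda>k. \<sigma> ^^ k) ` {..<3}" by auto
  qed auto
  finally show ?thesis .
qed

lemma carrier_Gal_L: "carrier (Gal L K) = {id, \<sigma>, \<sigma> ^^ 2}"
  unfolding carrier_Gal_L_powers by (simp add: lessThan_nat_numeral lessThan_Suc insert_commute)

lemma sigma_pow_inj: "\<sigma> ^^ i = \<sigma> ^^ j \<Longrightarrow> i < 3 \<Longrightarrow> j < 3 \<Longrightarrow> i = j"
proof -
  have "inj_on (\<lambda>k. \<sigma> ^^ k) {..<3::nat}"
    using card_Gal_L unfolding carrier_Gal_L_powers by (simp add: eq_card_imp_inj_on)
  then show "\<sigma> ^^ i = \<sigma> ^^ j \<Longrightarrow> i < 3 \<Longrightarrow> j < 3 \<Longrightarrow> i = j" by (auto simp: inj_on_def)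
qed

lemma sigma_rel_aut: "is_rel_aut L K \<sigma>"
  using sigma by (simp add: Gal_carrier)

lemma sigma_pow_rel_aut: "is_rel_aut L K (\<sigma> ^^ k)"
  using monoid.nat_pow_closed[OF group.is_monoid[OF group_Gal_L] sigma, of k]
  by (simp add: Gal_carrier)

lemmas sigma_pow_hom = rel_aut_hom[OF subfield_L sigma_pow_rel_aut]
lemmas sigma_pow_in = rel_aut_in[OF sigma_pow_rel_aut]
lemmas sigma_hom = sigma_pow_hom[where k=1, simplified]

lemma sigma_pow_out: "x \<notin> L \<Longrightarrow> (\<sigma> ^^ k) x = x"
  using is_rel_autD(5)[OF sigma_pow_rel_aut] .

lemma sigma_in: "x \<in> L \<Longrightarrow> \<sigma> x \<in> L"
  using sigma_pow_in[of _ 1] by simp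

lemma sigma_pow_two: "(\<sigma> ^^ 2) x = \<sigma> (\<sigma> x)"
  by (simp add: numeral_2_eq_2)

lemma sigma_three: "\<sigma> (\<sigma> (\<sigma> x)) = x"
  using sigma_pow_three by (simp add: numeral_3_eq_3 fun_eq_iff)

lemma sigma_fixed_in_K: "x \<in> L \<Longrightarrow> \<sigma> x = x \<Longrightarrow> x \<in> K"
proof -
  assume "x \<in> L" "\<sigma> x = x"
  then have "\<forall>s\<in>carrier (Gal L K). s x = x" by (simp add: carrier_Gal_L sigma_pow_two)
  then show "x \<in> K" using \<open>x \<in> L\<close> KL unfolding galois_ext_def by blast
qed

lemma moved_by_sigma: obtains x where "x \<in> L" "\<sigma> x \<noteq> x"
proof -
  have "\<sigma> \<noteq> id" using sigma_pow_inj[of 1 0] by fastforce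
  then obtain x where "\<sigma> x \<noteq> x" by (auto simp: fun_eq_iff)
  moreover have "x \<in> L" using calculation sigma_pow_out[of x 1] by fastforce
  ultimately show ?thesis using that by blast
qed

lemma G_rel_aut: "g \<in> carrier G \<Longrightarrow> is_rel_aut N K g"
  by (simp add: Gal_carrier)

lemmas G_hom = rel_aut_hom[OF subfield_N G_rel_aut]

lemma G_in: "g \<in> carrier G \<Longrightarrow> x \<in> N \<Longrightarrow> g x \<in> N"
  using rel_aut_in[OF G_rel_aut] .

lemma G_out: "g \<in> carrier G \<Longrightarrow> x \<notin> N \<Longrightarrow> g x = x"
  using is_rel_autD(5)[OF G_rel_aut] .

lemma G_fixes_K: "g \<in> carrier G \<Longrightarrow> x \<in> K \<Longrightarrow> g x = x"
  using is_rel_autD(4)[OF G_rel_aut] .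

lemma G_comp: "g \<in> carrier G \<Longrightarrow> h \<in> carrier G \<Longrightarrow> g \<circ> h \<in> carrier G"
  using monoid.m_closed[OF group.is_monoid[OF group_G]] by simp

lemma G_pow: "g \<in> carrier G \<Longrightarrow> g ^^ k \<in> carrier G"
  using monoid.nat_pow_closed[OF group.is_monoid[OF group_G]] by simp

lemma G_id: "id \<in> carrier G"
  using monoid.one_closed[OF group.is_monoid[OF group_G]] by simp

lemma G_inv: "g \<in> carrier G \<Longrightarrow> inv\<^bsub>G\<^esub> g = aut_inv N g"
  by (rule Gal_inv[OF subfield_N K_sub_N])

lemma G_aut_inv: "g \<in> carrier G \<Longrightarrow> aut_inv N g \<in> carrier G"
  using group.inv_closed[OF group_G] G_inv by metis

text \<open>\<open>g l\<close> is a root of \<open>(X - l)(X - \<sigma> l)(X - \<sigma>\<^sup>2 l)\<close>, whose coefficients are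
  \<open>\<sigma>\<close>-invariant and hence lie in \<open>K\<close>.\<close>
lemma G_maps_to_conjugate:
  assumes g: "g \<in> carrier G" and l: "l \<in> L"
  shows "g l = l \<or> g l = \<sigma> l \<or> g l = \<sigma> (\<sigma> l)"
proof -
  define l1 l2 where "l1 = \<sigma> l" and "l2 = \<sigma> l1"
  have l12: "l1 \<in> L" "l2 \<in> L" using l by (simp_all add: l1_def l2_def sigma_in)
  have sigma_l: "\<sigma> l = l1" "\<sigma> l1 = l2" "\<sigma> l2 = l" by (simp_all add: l1_def l2_def sigma_three)
  have sym_in_K: "e \<in> K" if "e \<in> L" "\<sigma> e = e" for e using sigma_fixed_in_K that .
  define e1 e2 e3 where "e1 = l + l1 + l2" and "e2 = l * l1 + l * l2 + l1 * l2" and "e3 = l * l1 * l2"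
  have e: "e1 \<in> K" "e2 \<in> K" "e3 \<in> K"
    unfolding e1_def e2_def e3_def
    by (intro sym_in_K; use l l12 in \<open>simp add: L_closed sigma_hom sigma_l algebra_simps\<close>)+
  have poly: "(z - l) * (z - l1) * (z - l2) = z * z * z - e1 * (z * z) + e2 * z - e3" for z
    by (simp add: e1_def e2_def e3_def algebra_simps)
  have "g ((l - l) * (l - l1) * (l - l2)) = (g l - l) * (g l - l1) * (g l - l2)"
    unfolding poly using g l e L_sub_N K_sub_N by (simp add: G_hom G_fixes_K N_closed subset_iff)
  then show ?thesis using G_hom(3)[OF g] by (simp add: l1_def l2_def)
qed

lemma G_preserves_L: "g \<in> carrier G \<Longrightarrow> x \<in> L \<Longrightarrow> g x \<in> L"
  using G_maps_to_conjugate[of g x] sigma_in[of x] sigma_in[of "\<sigma> x"] by auto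

definition acts_as :: "('a \<Rightarrow> 'a) \<Rightarrow> nat \<Rightarrow> bool" where
  "acts_as g k \<longleftrightarrow> (\<forall>x\<in>L. g x = (\<sigma> ^^ k) x)"

lemma acts_as_exists:
  assumes g: "g \<in> carrier G"
  obtains k where "k < 3" "acts_as g k"
proof -
  have "is_rel_aut L K (restrict_aut L g)"
    using rel_aut_restrict[OF G_rel_aut[OF g] subfield_L K_sub_L L_sub_N]
      G_preserves_L[OF g] G_preserves_L[OF G_aut_inv[OF g]] by blast
  then have "restrict_aut L g \<in> (\<lambda>k. \<sigma> ^^ k) ` {..<3}"
    using carrier_Gal_L_powers Gal_carrier by blast
  then obtain k where "k < 3" "restrict_aut L g = \<sigma> ^^ k" by auto
  then have "acts_as g k" unfolding acts_as_def by (metis restrict_aut_def)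
  then show ?thesis using that \<open>k < 3\<close> by blast
qed

lemma acts_as_mod: "acts_as g k \<longleftrightarrow> acts_as g (k mod 3)"
  unfolding acts_as_def using sigma_pow_mod by metis

lemma acts_as_comp: "acts_as g j \<Longrightarrow> acts_as h k \<Longrightarrow> h \<in> carrier G \<Longrightarrow> acts_as (g \<circ> h) (j + k)"
  unfolding acts_as_def by (simp add: funpow_add sigma_pow_in)

lemma acts_as_pow: "g \<in> carrier G \<Longrightarrow> acts_as g 1 \<Longrightarrow> acts_as (g ^^ k) k"
proof (induction k)
  case (Suc k)
  then have "acts_as (g \<circ> g ^^ k) (1 + k)" using acts_as_comp G_pow by blast
  then show ?case by (simp add: comp_def)
qed (simp add: acts_as_def)

lemma acts_as_unique: "acts_as g i \<Longrightarrow> acts_as g j \<Longrightarrow> i < 3 \<Longrightarrow> j < 3 \<Longrightarrow> i = j"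
proof -
  assume "acts_as g i" "acts_as g j" "i < 3" "j < 3"
  then have "\<sigma> ^^ i = \<sigma> ^^ j"
    using sigma_pow_out by (auto simp: acts_as_def fun_eq_iff)
  then show "i = j" using sigma_pow_inj \<open>i < 3\<close> \<open>j < 3\<close> by blast
qed

text \<open>If no automorphism restricted to \<open>\<sigma>\<close>, none would restrict to \<open>\<sigma>\<^sup>2\<close> either (its square would),
  and \<open>L\<close> would be fixed by \<open>Gal(N/K)\<close>.\<close>
lemma lift_of_sigma_exists: "\<exists>t\<in>carrier G. acts_as t 1"
proof (rule ccontr)
  assume no_lift: "\<not> ?thesis"
  have "acts_as g 0" if g: "g \<in> carrier G" for g
  proof -
    obtain k where k: "k < 3" "acts_as g k" using acts_as_exists[OF g] .
    have "acts_as (g \<circ> g) 1" if "k = 2"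
      using acts_as_comp[OF k(2) k(2) g] acts_as_mod[of "g \<circ> g" 4] that by simp
    then have "k \<noteq> 1" "k \<noteq> 2" using k no_lift g G_comp by blast+
    then have "k = 0" using k(1) by linarith
    then show ?thesis using k(2) by simp
  qed
  then have "L \<subseteq> K" using fixed_by_G_in_K L_sub_N by (auto simp: acts_as_def)
  moreover obtain x where "x \<in> L" "\<sigma> x \<noteq> x" by (rule moved_by_sigma)
  ultimately show False using is_rel_autD(4)[OF sigma_rel_aut] by auto
qed

definition lift :: "'a \<Rightarrow> 'a" where
  "lift = (SOME t. t \<in> carrier G \<and> acts_as t 1)"

lemma lift: "lift \<in> carrier G" "acts_as lift 1"
  using someI_ex[OF lift_of_sigma_exists[unfolded Bex_def]] by (auto simp: lift_def)

definition alpha :: 'a where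
  "alpha = (SOME \<alpha>. \<alpha> \<in> M \<and> \<alpha> ^ 2 - \<alpha> = a \<and> M = {l + m * \<alpha> | l m. l \<in> L \<and> m \<in> L})"

lemma alpha: "alpha \<in> N" "alpha ^ 2 - alpha = a" "M = adjoin L alpha"
  using someI_ex[OF Ma[unfolded Bex_def]] M_sub_N unfolding alpha_def adjoin_def by blast+

definition conj_root :: "nat \<Rightarrow> 'a" where
  "conj_root k = (lift ^^ k) alpha"

lemma conj_root_in: "conj_root k \<in> N"
  unfolding conj_root_def using G_in[OF G_pow[OF lift(1)] alpha(1)] .

lemma conj_root_AS: "conj_root k ^ 2 - conj_root k = (\<sigma> ^^ k) a"
proof -
  have "conj_root k ^ 2 - conj_root k = (lift ^^ k) (alpha ^ 2 - alpha)"
    unfolding conj_root_def using G_pow[OF lift(1)] alpha(1) by (simp add: G_hom N_closed)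
  then show ?thesis using alpha(2) acts_as_pow[OF lift, of k] aL by (simp add: acts_as_def)
qed

lemma conj_root_AS_in_L: "conj_root k ^ 2 - conj_root k \<in> L"
  using conj_root_AS sigma_pow_in[OF aL] by simp

lemma G_conj_root:
  assumes g: "g \<in> carrier G" and j: "acts_as g j"
  shows "g (conj_root k) = conj_root ((j + k) mod 3) \<or> g (conj_root k) = conj_root ((j + k) mod 3) + 1"
proof -
  have "g (conj_root k) ^ 2 - g (conj_root k) = g ((\<sigma> ^^ k) a)"
    using g conj_root_in by (simp add: G_hom N_closed flip: conj_root_AS)
  also have "\<dots> = (\<sigma> ^^ ((j + k) mod 3)) a"
    using j sigma_pow_in[OF aL] sigma_pow_mod by (metis acts_as_def comp_apply funpow_add)
  finally show ?thesis using AS_root_cases[OF char2] conj_root_AS by metis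
qed

section \<open>\<open>N\<close> is generated by the conjugates of \<open>\<alpha>\<close>\<close>

lemma galois_ext_if_stable:
  assumes E: "is_subfield E" and KE: "K \<subseteq> E" and EN: "E \<subseteq> N" and fin: "fin_ext E K"
    and stable: "\<And>g x. g \<in> carrier G \<Longrightarrow> x \<in> E \<Longrightarrow> g x \<in> E"
  shows "galois_ext E K"
  unfolding galois_ext_def
proof (intro conjI fin equalityI subsetI)
  fix x assume "x \<in> {x \<in> E. \<forall>s\<in>carrier (Gal E K). s x = x}"
  then have x: "x \<in> E" and fixed: "\<And>s. is_rel_aut E K s \<Longrightarrow> s x = x" by (auto simp: Gal_carrier)
  show "x \<in> K"
  proof (rule fixed_by_G_in_K)
    show "x \<in> N" using x EN by blast
    fix g assume g: "g \<in> carrier G"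
    have "is_rel_aut E K (restrict_aut E g)"
      using rel_aut_restrict[OF G_rel_aut[OF g] E KE EN] stable[OF g] stable[OF G_aut_inv[OF g]]
      by blast
    then show "g x = x" using fixed x by (fastforce simp: restrict_aut_def)
  qed
qed (use KE in \<open>auto simp: Gal_carrier is_rel_autD(4)\<close>)

lemma G_maps_adjoin_into:
  assumes g: "g \<in> carrier G" and S: "is_subfield S" and EN: "E \<subseteq> N" and b: "b \<in> N"
    and gE: "\<And>x. x \<in> E \<Longrightarrow> g x \<in> S" and gb: "g b \<in> S" and x: "x \<in> adjoin E b"
  shows "g x \<in> S"
proof -
  obtain e f where ef: "e \<in> E" "f \<in> E" and x: "x = e + f * b" using x by (rule adjoinE)
  moreover have "e \<in> N" "f \<in> N" using ef EN by auto
  ultimately have "g x = g e + g f * g b" using g b by (simp add: G_hom N_closed)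
  then show ?thesis using gE[OF ef(1)] gE[OF ef(2)] gb by (simp add: is_subfieldD(3,4)[OF S])
qed

lemma G_eq_on_adjoin:
  assumes g: "g \<in> carrier G" and h: "h \<in> carrier G" and EN: "E \<subseteq> N" and b: "b \<in> N"
    and gE: "\<And>x. x \<in> E \<Longrightarrow> g x = h x" and gb: "g b = h b" and x: "x \<in> adjoin E b"
  shows "g x = h x"
proof -
  obtain e f where ef: "e \<in> E" "f \<in> E" and x: "x = e + f * b" using x by (rule adjoinE)
  moreover have "e \<in> N" "f \<in> N" using ef EN by auto
  ultimately have "g x = g e + g f * g b" "h x = h e + h f * h b"
    using g h b by (simp_all add: G_hom N_closed)
  then show ?thesis using gE[OF ef(1)] gE[OF ef(2)] gb by simp
qed

abbreviation "L\<^sub>1 \<equiv> adjoin L (conj_root 0)"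
abbreviation "L\<^sub>2 \<equiv> adjoin L\<^sub>1 (conj_root 1)"
abbreviation "L\<^sub>3 \<equiv> adjoin L\<^sub>2 (conj_root 2)"

lemma root_tower:
  "is_subfield L\<^sub>1" "is_subfield L\<^sub>2" "is_subfield L\<^sub>3"
  "L \<subseteq> L\<^sub>1" "L\<^sub>1 \<subseteq> L\<^sub>2" "L\<^sub>2 \<subseteq> L\<^sub>3" "L\<^sub>1 \<subseteq> N" "L\<^sub>2 \<subseteq> N" "L\<^sub>3 \<subseteq> N"
  "fin_ext L\<^sub>3 K"
proof -
  note sub = subfield_adjoin[OF char2] and fin = fin_ext_adjoin[OF char2]
  note roots = conj_root_AS_in_L
  show L1: "is_subfield L\<^sub>1" "L \<subseteq> L\<^sub>1"
    using sub[OF subfield_L roots] subset_adjoin[OF subfield_L] by auto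
  show L2: "is_subfield L\<^sub>2" "L\<^sub>1 \<subseteq> L\<^sub>2"
    using sub[OF L1(1)] roots L1(2) subset_adjoin[OF L1(1)] by auto
  show L3: "is_subfield L\<^sub>3" "L\<^sub>2 \<subseteq> L\<^sub>3"
    using sub[OF L2(1)] roots L1(2) L2(2) subset_adjoin[OF L2(1)] by auto
  show N: "L\<^sub>1 \<subseteq> N" "L\<^sub>2 \<subseteq> N" "L\<^sub>3 \<subseteq> N"
    by (intro adjoin_subset[OF subfield_N] conj_root_in L_sub_N; fact)+
  have "fin_ext L K" using KL by (simp add: galois_ext_def)
  then show "fin_ext L\<^sub>3 K" using fin roots L1(2) L2(2) by (meson fin subset_iff)
qed

lemma conj_roots_in_root_field: "k < 3 \<Longrightarrow> conj_root k \<in> L\<^sub>3"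
proof -
  have "conj_root 0 \<in> L\<^sub>3" "conj_root 1 \<in> L\<^sub>3" "conj_root 2 \<in> L\<^sub>3"
    using generator_in_adjoin[OF subfield_L] generator_in_adjoin[OF root_tower(1)]
      generator_in_adjoin[OF root_tower(2)] root_tower(5,6) by blast+
  moreover assume "k < 3"
  ultimately show ?thesis using less_3_cases by blast
qed

lemma G_preserves_root_field:
  assumes g: "g \<in> carrier G" and x: "x \<in> L\<^sub>3"
  shows "g x \<in> L\<^sub>3"
proof -
  obtain j where j: "acts_as g j" using acts_as_exists[OF g] by blast
  have roots: "g (conj_root k) \<in> L\<^sub>3" for k
    using G_conj_root[OF g j, of k] conj_roots_in_root_field[of "(j + k) mod 3"]
      is_subfieldD(2,3)[OF root_tower(3)] by auto
  note step = G_maps_adjoin_into[OF g root_tower(3) _ conj_root_in _ roots]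
  have "y \<in> L \<Longrightarrow> g y \<in> L\<^sub>3" for y using G_preserves_L[OF g] root_tower(4-6) by blast
  then have "y \<in> L\<^sub>1 \<Longrightarrow> g y \<in> L\<^sub>3" for y using step[OF L_sub_N] by blast
  then have "y \<in> L\<^sub>2 \<Longrightarrow> g y \<in> L\<^sub>3" for y using step[OF root_tower(7)] by blast
  then show ?thesis using step[OF root_tower(8)] x by blast
qed

lemma N_eq_root_field: "L\<^sub>3 = N"
proof -
  have "M \<subseteq> L\<^sub>3"
    using alpha(3) adjoin_subset[OF root_tower(3)] conj_roots_in_root_field[of 0] root_tower
    by (simp add: conj_root_def)
  moreover have "galois_ext L\<^sub>3 K"
    using root_tower K_sub_L G_preserves_root_field by (intro galois_ext_if_stable) auto
  ultimately show ?thesis using N root_tower(3,9) unfolding galois_closure_def by blast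
qed

lemma G_eqI:
  assumes g: "g \<in> carrier G" and h: "h \<in> carrier G"
    and on_L: "\<And>x. x \<in> L \<Longrightarrow> g x = h x" and on_roots: "\<And>k. k < 3 \<Longrightarrow> g (conj_root k) = h (conj_root k)"
  shows "g = h"
proof
  fix x
  note step = G_eq_on_adjoin[OF g h _ conj_root_in]
  have "y \<in> L\<^sub>1 \<Longrightarrow> g y = h y" for y using step[OF L_sub_N on_L on_roots[of 0]] by simp
  then have "y \<in> L\<^sub>2 \<Longrightarrow> g y = h y" for y using step[OF root_tower(7) _ on_roots[of 1]] by simp
  then have "g y = h y" if "y \<in> L\<^sub>3" for y
    using step[OF root_tower(8) _ on_roots[of 2]] that by simp
  then show "g x = h x"
    using G_out[OF g] G_out[OF h] N_eq_root_field by (cases "x \<in> N") auto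
qed

section \<open>The subgroup \<open>Gal(N/L)\<close>\<close>

abbreviation H where "H \<equiv> carrier (Gal N L)"

lemma H_iff: "r \<in> H \<longleftrightarrow> r \<in> carrier G \<and> (\<forall>x\<in>L. r x = x)"
  using K_sub_L by (auto simp: Gal_carrier is_rel_aut_def)

lemma H_subset: "H \<subseteq> carrier G" and H_fixes_L: "r \<in> H \<Longrightarrow> x \<in> L \<Longrightarrow> r x = x"
  using H_iff by auto

lemma H_iff_acts_as_0: "r \<in> H \<longleftrightarrow> r \<in> carrier G \<and> acts_as r 0"
  by (simp add: H_iff acts_as_def)

definition flips :: "('a \<Rightarrow> 'a) \<Rightarrow> nat \<Rightarrow> bool" where
  "flips r k \<longleftrightarrow> r (conj_root k) \<noteq> conj_root k"

lemma H_conj_root: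
  assumes r: "r \<in> H"
  shows "r (conj_root k) = conj_root k + (if flips r k then 1 else 0)"
proof -
  have "r (conj_root k) ^ 2 - r (conj_root k) = r ((\<sigma> ^^ k) a)"
    using r H_subset conj_root_in by (auto simp: G_hom N_closed simp flip: conj_root_AS)
  also have "\<dots> = conj_root k ^ 2 - conj_root k"
    using H_fixes_L[OF r] sigma_pow_in[OF aL] conj_root_AS by simp
  finally show ?thesis using AS_root_cases[OF char2] by (auto simp: flips_def)
qed

lemma H_comp:
  assumes r: "r \<in> H" and s: "s \<in> H"
  shows "r \<circ> s \<in> H" and "flips (r \<circ> s) k \<longleftrightarrow> flips r k \<noteq> flips s k"
proof -
  show "r \<circ> s \<in> H" using r s G_comp by (auto simp: H_iff)
  define \<delta> where "\<delta> b = (if b then 1 else 0 :: 'a)" for b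
  have \<delta>: "\<delta> b \<in> L" for b using L_closed by (simp add: \<delta>_def)
  have "(r \<circ> s) (conj_root k) = r (conj_root k + \<delta> (flips s k))"
    using H_conj_root[OF s] by (simp add: \<delta>_def)
  also have "\<dots> = r (conj_root k) + r (\<delta> (flips s k))"
    using G_hom(1)[OF H_subset[THEN subsetD, OF r] conj_root_in] \<delta> L_sub_N by blast
  also have "\<dots> = conj_root k + (\<delta> (flips r k) + \<delta> (flips s k))"
    using H_conj_root[OF r] H_fixes_L[OF r \<delta>] by (simp add: \<delta>_def add.assoc)
  finally show "flips (r \<circ> s) k \<longleftrightarrow> flips r k \<noteq> flips s k"
    using char2_add_self[OF char2, of 1] by (auto simp: flips_def \<delta>_def)
qed

lemma H_eqI: "r \<in> H \<Longrightarrow> s \<in> H \<Longrightarrow> (\<And>k. k < 3 \<Longrightarrow> flips r k = flips s k) \<Longrightarrow> r = s"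
  by (rule G_eqI) (auto simp: H_iff H_conj_root)

lemma id_in_H: "id \<in> H"
  using G_id by (simp add: H_iff)

lemma H_involution:
  assumes r: "r \<in> H"
  shows "r \<circ> r = id"
proof (rule H_eqI)
  show "r \<circ> r \<in> H" "id \<in> H" using H_comp(1)[OF r r] id_in_H .
  show "flips (r \<circ> r) k = flips id k" for k using H_comp(2)[OF r r, of k] by (simp add: flips_def)
qed

lemma subgroup_H: "subgroup H G"
proof (rule group.subgroupI[OF group_G H_subset])
  show "H \<noteq> {}" using id_in_H by blast
  fix r s assume r: "r \<in> H" and s: "s \<in> H"
  show "r \<otimes>\<^bsub>G\<^esub> s \<in> H" using H_comp(1)[OF r s] by simp
  have "inv\<^bsub>G\<^esub> r = r"
    using group.inv_equality[OF group_G] H_involution[OF r] H_subset r by auto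
  then show "inv\<^bsub>G\<^esub> r \<in> H" using r by simp
qed

lemma normal_H: "H \<lhd> G"
  unfolding group.normal_inv_iff[OF group_G]
proof (intro conjI subgroup_H ballI)
  fix g r assume g: "g \<in> carrier G" and r: "r \<in> H"
  have g': "inv\<^bsub>G\<^esub> g \<in> carrier G" and gg': "g \<circ> inv\<^bsub>G\<^esub> g = id"
    using group.inv_closed[OF group_G g] group.r_inv[OF group_G g] by auto
  have "g (r ((inv\<^bsub>G\<^esub> g) x)) = x" if "x \<in> L" for x
    using H_fixes_L[OF r G_preserves_L[OF g' that]] gg' by (simp add: fun_eq_iff)
  then show "g \<otimes>\<^bsub>G\<^esub> r \<otimes>\<^bsub>G\<^esub> inv\<^bsub>G\<^esub> g \<in> H"
    using G_comp[OF G_comp[OF g H_subset[THEN subsetD, OF r]] g'] by (simp add: H_iff)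
qed

text \<open>An element of order three lifting \<open>\<sigma>\<close>: the cube of any lift lies in the elementary abelian
  \<open>2\<close>-group \<open>H\<close>, so its fourth power works.\<close>
definition tau where "tau = lift ^^ 4"

lemma tau: "tau \<in> carrier G" "acts_as tau 1" "tau ^^ 3 = id"
proof -
  show "tau \<in> carrier G" unfolding tau_def by (rule G_pow[OF lift(1)])
  show "acts_as tau 1" using acts_as_pow[OF lift, of 4] acts_as_mod[of tau 4] by (simp add: tau_def)
  have "acts_as (lift ^^ 3) 0"
    using acts_as_pow[OF lift, of 3] acts_as_mod[of "lift ^^ 3" 3] by simp
  then have "lift ^^ 3 \<in> H" using G_pow[OF lift(1)] by (simp add: H_iff_acts_as_0)
  then have "lift ^^ (3 + 3) = id" using H_involution by (simp only: funpow_add)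
  then have "lift ^^ 6 = id" by simp
  then have "lift ^^ (6 + 6) = id" by (simp only: funpow_add) simp
  then have "(lift ^^ 4) ^^ 3 = id" by (simp add: funpow_mult)
  then show "tau ^^ 3 = id" by (simp add: tau_def)
qed

lemma tau_pow_mod: "tau ^^ k = tau ^^ (k mod 3)"
  by (rule funpow_mod[OF tau(3)])

lemma eq_on_H_fixed:
  assumes g: "g \<in> carrier G" and h: "h \<in> carrier G" and on_L: "\<forall>x\<in>L. g x = h x"
    and u: "u \<in> N" and fixed: "\<And>r. r \<in> H \<Longrightarrow> r u = u"
  shows "g u = h u"
proof -
  have "aut_inv N h \<circ> g \<in> H"
    using G_comp[OF G_aut_inv[OF h] g] on_L aut_inv_left[OF G_rel_aut[OF h]] by (simp add: H_iff)
  then have "aut_inv N h (g u) = u" using fixed by fastforce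
  then have "h (aut_inv N h (g u)) = h u" by simp
  then show ?thesis using aut_inv_right[OF G_rel_aut[OF h] G_in[OF g u]] by simp
qed

lemma H_fixed_trace_in_K:
  assumes u: "u \<in> N" and fixed: "\<And>r. r \<in> H \<Longrightarrow> r u = u"
  shows "(\<Sum>k<3. (tau ^^ k) u) \<in> K"
proof (rule fixed_by_G_in_K)
  show "(\<Sum>k<3. (tau ^^ k) u) \<in> N"
    using u G_in[OF G_pow[OF tau(1)]] by (simp add: subfield_sum[OF subfield_N])
  fix g assume g: "g \<in> carrier G"
  obtain j where j: "j < 3" "acts_as g j" using acts_as_exists[OF g] by blast
  have "g ((tau ^^ k) u) = (tau ^^ ((j + k) mod 3)) u" for k
  proof -
    have "acts_as (g \<circ> tau ^^ k) (j + k)"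
      using acts_as_comp[OF j(2) acts_as_pow[OF tau(1,2)] G_pow[OF tau(1)]] .
    then have "\<forall>x\<in>L. (g \<circ> tau ^^ k) x = (tau ^^ (j + k)) x"
      using acts_as_pow[OF tau(1,2), of "j + k"] by (simp add: acts_as_def)
    then show ?thesis
      using eq_on_H_fixed[of "g \<circ> tau ^^ k" "tau ^^ (j + k)" u] G_comp[OF g G_pow[OF tau(1)]]
        G_pow[OF tau(1)] u fixed tau_pow_mod by simp
  qed
  moreover have "g (\<Sum>k<3. (tau ^^ k) u) = (\<Sum>k<3. g ((tau ^^ k) u))"
    by (intro rel_aut_sum[OF subfield_N G_rel_aut[OF g]]) (simp add: u G_in[OF G_pow[OF tau(1)]])
  ultimately have "g (\<Sum>k<3. (tau ^^ k) u) = (\<Sum>k<3. (tau ^^ ((j + k) mod 3)) u)" by simp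
  also have "\<dots> = (\<Sum>k<3. (tau ^^ k) u)"
    using less_3_cases[OF j(1)] by (elim disjE) (simp_all add: lessThan_nat_numeral add_ac numeral_2_eq_2)
  finally show "g (\<Sum>k<3. (tau ^^ k) u) = (\<Sum>k<3. (tau ^^ k) u)" .
qed

lemma tau_pow_mult: "x \<in> N \<Longrightarrow> l \<in> L \<Longrightarrow> (tau ^^ k) (l * x) = (\<sigma> ^^ k) l * (tau ^^ k) x"
  using G_hom(2)[OF G_pow[OF tau(1)]] acts_as_pow[OF tau(1,2), of k] L_sub_N
  by (auto simp: acts_as_def)

text \<open>Fixed field of \<open>H\<close>: the traces \<open>T l\<close> of \<open>l f\<close> lie in \<open>K\<close> and are linear in the three
  conjugates of \<open>f\<close> with a Vandermonde matrix in the conjugates of an element \<open>x\<close> moved by \<open>\<sigma>\<close>,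
  which can be inverted over \<open>L\<close>.\<close>
lemma H_fixed_in_L:
  assumes f: "f \<in> N" and fixed: "\<And>r. r \<in> H \<Longrightarrow> r f = f"
  shows "f \<in> L"
proof -
  obtain x where x: "x \<in> L" "\<sigma> x \<noteq> x" by (rule moved_by_sigma)
  define y z where "y = \<sigma> x" and "z = \<sigma> y"
  have yz: "y \<in> L" "z \<in> L" using x by (simp_all add: y_def z_def sigma_in)
  have "x - y \<noteq> 0" "x - z \<noteq> 0"
    using x sigma_three[of x] by (auto simp: y_def z_def)
  then have D: "(x - y) * (x - z) \<noteq> 0" by simp
  define T where "T l = (\<Sum>k<3. (tau ^^ k) (l * f))" for l
  have T_in_L: "T l \<in> L" if l: "l \<in> L" for l
  proof -
    have "l * f \<in> N" using l f L_sub_N by (auto simp: N_closed)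
    moreover have "r (l * f) = l * f" if "r \<in> H" for r
      using G_hom(2)[OF H_subset[THEN subsetD, OF that]] H_fixes_L[OF that l] fixed[OF that] l f L_sub_N
      by auto
    ultimately show ?thesis unfolding T_def using H_fixed_trace_in_K K_sub_L by blast
  qed
  have T: "T l = l * f + \<sigma> l * tau f + \<sigma> (\<sigma> l) * tau (tau f)" if "l \<in> L" for l
    using tau_pow_mult[OF f that]
    by (simp add: T_def lessThan_nat_numeral numeral_2_eq_2)
  have "(x - y) * (x - z) * f = T (x ^ 2) - (y + z) * T x + y * z * T 1"
    using x yz by (simp add: T L_closed sigma_hom y_def z_def sigma_three algebra_simps power2_eq_square)
  then have "f = (T (x ^ 2) - (y + z) * T x + y * z * T 1) / ((x - y) * (x - z))"
    using D by (simp add: eq_divide_eq mult.commute)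
  then show "f \<in> L" using x yz T_in_L by (simp add: L_closed)
qed

section \<open>Artin--Schreier duality\<close>

definition AS_relation :: "nat set \<Rightarrow> bool" where
  "AS_relation T \<longleftrightarrow> (\<Sum>i\<in>T. (\<sigma> ^^ i) a) \<in> AS_sub L"

lemma sum_conj_roots_AS:
  "(\<Sum>i\<in>T. conj_root i) ^ 2 - (\<Sum>i\<in>T. conj_root i) = (\<Sum>i\<in>T. (\<sigma> ^^ i) a)"
  by (simp add: char2_square_sum[OF char2] sum_subtractf[symmetric] conj_root_AS)

lemma H_sum_conj_roots:
  assumes r: "r \<in> H" and T: "finite T"
  shows "r (\<Sum>i\<in>T. conj_root i) = (\<Sum>i\<in>T. conj_root i) + (if odd (card {i\<in>T. flips r i}) then 1 else 0)"
proof -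
  have "r (\<Sum>i\<in>T. conj_root i) = (\<Sum>i\<in>T. r (conj_root i))"
    by (rule rel_aut_sum[OF subfield_N G_rel_aut[OF H_subset[THEN subsetD, OF r]]]) (rule conj_root_in)
  then have "r (\<Sum>i\<in>T. conj_root i) = (\<Sum>i\<in>T. conj_root i + (if flips r i then 1 else 0))"
    by (simp add: H_conj_root[OF r])
  then show ?thesis by (simp add: sum.distrib char2_indicator_sum[OF char2 T])
qed

text \<open>The sum of the \<open>\<alpha>\<^sub>i\<close>, \<open>i \<in> T\<close>, is a root of \<open>X\<^sup>2 - X - \<Sum>i\<in>T. \<sigma>\<^sup>i a\<close>: it lies in \<open>L\<close>
  exactly when \<open>T\<close> is a relation, and \<open>r \<in> H\<close> moves it exactly when \<open>r\<close> flips an odd number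
  of the \<open>\<alpha>\<^sub>i\<close>.\<close>
lemma AS_relation_even_flips:
  assumes rel: "AS_relation T" and r: "r \<in> H" and T: "finite T"
  shows "even (card {i\<in>T. flips r i})"
proof -
  obtain y where y: "y \<in> L" "(\<Sum>i\<in>T. (\<sigma> ^^ i) a) = y ^ 2 - y"
    using rel by (auto simp: AS_relation_def AS_sub_def)
  then have "(\<Sum>i\<in>T. conj_root i) \<in> L"
    using AS_root_cases[OF char2] sum_conj_roots_AS L_closed by metis
  then show ?thesis using H_sum_conj_roots[OF r T] H_fixes_L[OF r] by (auto split: if_splits)
qed

lemma nonrelation_odd_flips:
  assumes T: "finite T" and nonrel: "\<not> AS_relation T"
  obtains r where "r \<in> H" "odd (card {i\<in>T. flips r i})"
proof -
  have "(\<Sum>i\<in>T. conj_root i) \<notin> L"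
    using nonrel sum_conj_roots_AS by (auto simp: AS_relation_def AS_sub_def)
  moreover have "(\<Sum>i\<in>T. conj_root i) \<in> N" by (rule subfield_sum[OF subfield_N conj_root_in])
  ultimately obtain r where r: "r \<in> H" "r (\<Sum>i\<in>T. conj_root i) \<noteq> (\<Sum>i\<in>T. conj_root i)"
    using H_fixed_in_L by blast
  then have "odd (card {i\<in>T. flips r i})"
    using H_sum_conj_roots[OF r(1) T] by (auto split: if_splits)
  then show ?thesis using that r(1) by blast
qed

definition is_flip_pattern :: "bool \<Rightarrow> bool \<Rightarrow> bool \<Rightarrow> bool" where
  "is_flip_pattern x y z \<longleftrightarrow> (\<exists>r\<in>H. flips r 0 = x \<and> flips r 1 = y \<and> flips r 2 = z)"

lemma is_flip_pattern_flips: "r \<in> H \<Longrightarrow> is_flip_pattern (flips r 0) (flips r 1) (flips r 2)"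
  unfolding is_flip_pattern_def by blast

lemma is_flip_patternE:
  assumes "is_flip_pattern x y z"
  obtains r where "r \<in> H" "flips r 0 = x" "flips r 1 = y" "flips r 2 = z"
  using assms by (auto simp: is_flip_pattern_def)

lemma is_flip_pattern_zero: "is_flip_pattern False False False"
  unfolding is_flip_pattern_def by (intro bexI[of _ id] id_in_H) (simp add: flips_def)

lemma is_flip_pattern_xor:
  assumes "is_flip_pattern x y z" "is_flip_pattern x' y' z'"
  shows "is_flip_pattern (x \<noteq> x') (y \<noteq> y') (z \<noteq> z')"
proof -
  obtain r s where "r \<in> H" "flips r 0 = x" "flips r 1 = y" "flips r 2 = z"
    and "s \<in> H" "flips s 0 = x'" "flips s 1 = y'" "flips s 2 = z'"
    using assms by (auto simp: is_flip_pattern_def)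
  then show ?thesis unfolding is_flip_pattern_def
    by (intro bexI[of _ "r \<circ> s"]) (simp_all add: H_comp)
qed

lemma H_flips_any_root:
  assumes r: "r \<in> H" and \<beta>: "\<beta> ^ 2 - \<beta> = (\<sigma> ^^ k) a"
  shows "r \<beta> \<noteq> \<beta> \<longleftrightarrow> flips r k"
proof -
  have "\<beta> = conj_root k \<or> \<beta> = conj_root k + 1"
    using AS_root_cases[OF char2, of \<beta> "conj_root k"] \<beta> conj_root_AS by simp
  moreover have "r (conj_root k + 1) = r (conj_root k) + 1"
    using G_hom(1,4)[OF H_subset[THEN subsetD, OF r]] conj_root_in N_closed by simp
  ultimately show ?thesis by (auto simp: flips_def)
qed

text \<open>Conjugation by \<open>\<tau>\<close> rotates flip patterns, since \<open>\<tau>\<close> carries a root of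
  \<open>X\<^sup>2 - X - \<sigma>\<^sup>k a\<close> to one of \<open>X\<^sup>2 - X - \<sigma>\<^sup>k\<^sup>+\<^sup>1 a\<close>.\<close>
lemma H_conjugate_flips:
  assumes r: "r \<in> H"
  shows "tau \<circ> r \<circ> tau ^^ 2 \<in> H" and "flips (tau \<circ> r \<circ> tau ^^ 2) ((k + 1) mod 3) = flips r k"
proof -
  have tau3: "tau ((tau ^^ 2) x) = x" for x
    using tau(3) by (simp add: numeral_3_eq_3 numeral_2_eq_2 fun_eq_iff)
  have tau3': "(tau ^^ 2) (tau x) = x" for x
    using tau(3) by (simp add: numeral_3_eq_3 numeral_2_eq_2 fun_eq_iff)
  have rG: "r \<in> carrier G" using r H_subset by blast
  show r': "tau \<circ> r \<circ> tau ^^ 2 \<in> H"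
    using G_comp[OF G_comp[OF tau(1) rG] G_pow[OF tau(1)]] H_fixes_L[OF r]
      G_preserves_L[OF G_pow[OF tau(1)]]
    by (simp add: H_iff tau3)
  define \<beta> where "\<beta> = tau (conj_root k)"
  have "\<beta> ^ 2 - \<beta> = tau (conj_root k ^ 2 - conj_root k)"
    using tau(1) conj_root_in by (simp add: \<beta>_def G_hom N_closed)
  also have "\<dots> = (\<sigma> ^^ (k + 1)) a"
    using tau(2) sigma_pow_in[OF aL] by (simp add: conj_root_AS acts_as_def)
  finally have "\<beta> ^ 2 - \<beta> = (\<sigma> ^^ ((k + 1) mod 3)) a" by (metis sigma_pow_mod)
  from H_flips_any_root[OF r' this]
  have "flips (tau \<circ> r \<circ> tau ^^ 2) ((k + 1) mod 3) \<longleftrightarrow> tau (r (conj_root k)) \<noteq> tau (conj_root k)"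
    by (simp add: \<beta>_def tau3')
  also have "\<dots> \<longleftrightarrow> flips r k"
    using rel_aut_inj[OF G_rel_aut[OF tau(1)]] G_in[OF rG] conj_root_in by (auto simp: flips_def)
  finally show "flips (tau \<circ> r \<circ> tau ^^ 2) ((k + 1) mod 3) = flips r k" .
qed

lemma is_flip_pattern_rotate:
  assumes "is_flip_pattern x y z"
  shows "is_flip_pattern z x y"
proof -
  obtain r where r: "r \<in> H" "flips r 0 = x" "flips r 1 = y" "flips r 2 = z"
    using assms by (auto simp: is_flip_pattern_def)
  show ?thesis
    unfolding is_flip_pattern_def
    using H_conjugate_flips(1)[OF r(1)] H_conjugate_flips(2)[OF r(1), of 0]
      H_conjugate_flips(2)[OF r(1), of 1] H_conjugate_flips(2)[OF r(1), of 2] r(2-4)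
    by (intro bexI[of _ "tau \<circ> r \<circ> tau ^^ 2"]) (simp_all add: numeral_2_eq_2)
qed

lemma is_flip_pattern_rotate2: "is_flip_pattern x y z \<Longrightarrow> is_flip_pattern y z x"
  using is_flip_pattern_rotate by blast

lemma not_AS_relation_0: "\<not> AS_relation {0}"
proof
  assume "AS_relation {0}"
  then obtain y where y: "y \<in> L" "a = y ^ 2 - y" by (auto simp: AS_relation_def AS_sub_def)
  then have "alpha \<in> L" using AS_root_cases[OF char2, of alpha y] alpha(2) L_closed by auto
  then have "M \<subseteq> L"
    using adjoin_subset[OF subfield_L, of L alpha] alpha(3) by blast
  then have "M = L" using L_sub_M by blast
  have "s = id" if "is_rel_aut L L s" for s
    using is_rel_autD(4,5)[OF that] by (metis eq_id_iff)
  moreover have "is_rel_aut L L id" by (simp add: is_rel_aut_def)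
  ultimately have "carrier (Gal M L) = {id}" using \<open>M = L\<close> by (auto simp: Gal_carrier)
  then show False using iso_same_card[OF GML] by (simp add: carrier_integer_mod_group)
qed

lemma AS_relation_rotate:
  assumes T: "T \<subseteq> {..<3}" and rel: "AS_relation T"
  shows "AS_relation ((\<lambda>i. (i + 1) mod 3) ` T)"
proof -
  have "inj_on (\<lambda>i. (i + 1) mod 3) T"
    unfolding inj_on_def using T by (auto simp: subset_iff mod_Suc split: if_splits)
  then have "(\<Sum>j\<in>(\<lambda>i. (i + 1) mod 3) ` T. (\<sigma> ^^ j) a) = (\<Sum>i\<in>T. \<sigma> ((\<sigma> ^^ i) a))"
    by (simp add: sum.reindex sigma_pow_mod[symmetric])
  also have "\<dots> = \<sigma> (\<Sum>i\<in>T. (\<sigma> ^^ i) a)"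
    by (rule rel_aut_sum[OF subfield_L sigma_rel_aut, symmetric]) (rule sigma_pow_in[OF aL])
  finally show ?thesis
    using AS_sub_rel_aut[OF subfield_L sigma_rel_aut] rel by (simp add: AS_relation_def)
qed

lemma AS_relation_diff:
  assumes "finite T" "S \<subseteq> T" "AS_relation S" "AS_relation T"
  shows "AS_relation (T - S)"
proof -
  have "(\<Sum>i\<in>T - S. (\<sigma> ^^ i) a) = (\<Sum>i\<in>T. (\<sigma> ^^ i) a) + (\<Sum>i\<in>S. (\<sigma> ^^ i) a)"
    using assms(1,2) by (simp add: sum_diff char2_diff[OF char2])
  then show ?thesis using assms(3,4) AS_sub_add[OF char2 subfield_L] by (simp add: AS_relation_def)
qed

lemma AS_relations:
  "\<not> AS_relation {1}" "\<not> AS_relation {2}"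
  "AS_relation {0, 1} \<Longrightarrow> AS_relation {1, 2}" "AS_relation {1, 2} \<Longrightarrow> AS_relation {0, 2}"
  "AS_relation {0, 2} \<Longrightarrow> AS_relation {0, 1}" "AS_relation {0, 1} \<Longrightarrow> \<not> AS_relation {0, 1, 2}"
proof -
  note rot = AS_relation_rotate
  show "\<not> AS_relation {2}" using not_AS_relation_0 rot[of "{2}"] by auto
  then show "\<not> AS_relation {1}" using rot[of "{1}"] by (auto simp: numeral_2_eq_2)
  show "AS_relation {0, 1} \<Longrightarrow> AS_relation {1, 2}"
    using rot[of "{0, 1}"] by (simp add: numeral_2_eq_2)
  show "AS_relation {1, 2} \<Longrightarrow> AS_relation {0, 2}"
    using rot[of "{1, 2}"] by (simp add: numeral_2_eq_2 insert_commute)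
  show "AS_relation {0, 2} \<Longrightarrow> AS_relation {0, 1}"
    using rot[of "{0, 2}"] by (simp add: numeral_2_eq_2 insert_commute)
  have "{0, 1, 2} - {0, 1} = {2::nat}" by auto
  then show "AS_relation {0, 1} \<Longrightarrow> \<not> AS_relation {0, 1, 2}"
    using AS_relation_diff[of "{0, 1, 2}" "{0, 1}"] \<open>\<not> AS_relation {2}\<close> by auto
qed

lemma H_flips_pair: "r \<in> H \<Longrightarrow> AS_relation {j, k} \<Longrightarrow> j \<noteq> k \<Longrightarrow> flips r j = flips r k"
  using AS_relation_even_flips[of "{j, k}" r] odd_card_filter_pair[of j k "flips r"] by simp

lemma H_flips_triple: "r \<in> H \<Longrightarrow> AS_relation {0, 1, 2} \<Longrightarrow> flips r 2 \<longleftrightarrow> flips r 0 \<noteq> flips r 1"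
  using AS_relation_even_flips[of "{0, 1, 2}" r] odd_card_filter_012[of "flips r"] by auto

lemma is_flip_pattern_even:
  assumes rel: "AS_relation {0, 1, 2}"
  shows "is_flip_pattern x y (x \<noteq> y)"
proof -
  obtain r where r: "r \<in> H" "odd (card {i \<in> {0}. flips r i})"
    by (rule nonrelation_odd_flips[of "{0}"]) (simp_all add: not_AS_relation_0)
  then have r: "r \<in> H" "flips r 0" using odd_card_filter_singleton[of 0 "flips r"] by simp_all
  then have v: "is_flip_pattern True (flips r 1) (\<not> flips r 1)"
    using is_flip_pattern_flips[OF r(1)] H_flips_triple[OF r(1) rel] by simp
  have "is_flip_pattern True True False \<and> is_flip_pattern True False True \<and>
      is_flip_pattern False True True"
  proof (cases "flips r 1")
    case True
    then have "is_flip_pattern True True False" using v by simp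
    with is_flip_pattern_rotate[OF this] is_flip_pattern_rotate2[OF this] show ?thesis by simp
  next
    case False
    then have "is_flip_pattern True False True" using v by simp
    with is_flip_pattern_rotate[OF this] is_flip_pattern_rotate2[OF this] show ?thesis by simp
  qed
  then show ?thesis using is_flip_pattern_zero by (cases x; cases y) simp_all
qed

text \<open>A pattern of weight one rotates to \<open>(1, 0, 0)\<close>, whose rotations generate everything.
  The witness for \<open>{0, 1, 2}\<close> has odd weight, so it has weight one unless it is \<open>(1, 1, 1)\<close>; then
  the witness for \<open>{0, 1}\<close> or its sum with \<open>(1, 1, 1)\<close> has weight one.\<close>
lemma is_flip_pattern_all:
  assumes "\<not> AS_relation {0, 1}" "\<not> AS_relation {0, 1, 2}"
  shows "is_flip_pattern x y z"
proof -
  have unit: "is_flip_pattern True False False"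
    if "is_flip_pattern u v w" "(u \<and> \<not> v \<and> \<not> w) \<or> (\<not> u \<and> v \<and> \<not> w) \<or> (\<not> u \<and> \<not> v \<and> w)" for u v w
    using that(2) is_flip_pattern_rotate[OF that(1)] is_flip_pattern_rotate2[OF that(1)] that(1)
    by auto
  obtain r where r: "r \<in> H" "odd (card {i\<in>{0, 1, 2}. flips r i})"
    by (rule nonrelation_odd_flips[OF _ assms(2)]) simp_all
  obtain s where s: "s \<in> H" "odd (card {i\<in>{0, 1}. flips s i})"
    by (rule nonrelation_odd_flips[OF _ assms(1)]) simp_all
  have e0: "is_flip_pattern True False False"
  proof (cases "flips r 0 \<and> flips r 1 \<and> flips r 2")
    case True
    show ?thesis
    proof (cases "flips s 2")
      case True
      have "is_flip_pattern (\<not> flips s 0) (\<not> flips s 1) (\<not> flips s 2)"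
        using is_flip_pattern_xor[OF is_flip_pattern_flips[OF s(1)] is_flip_pattern_flips[OF r(1)]]
          \<open>flips r 0 \<and> flips r 1 \<and> flips r 2\<close>
        by simp
      from unit[OF this] show ?thesis using s(2) True odd_card_filter_pair[of 0 1 "flips s"] by auto
    next
      case False
      from unit[OF is_flip_pattern_flips[OF s(1)]] show ?thesis
        using s(2) False odd_card_filter_pair[of 0 1 "flips s"] by auto
    qed
  next
    case False
    from unit[OF is_flip_pattern_flips[OF r(1)]] show ?thesis
      using r(2) False odd_card_filter_012[of "flips r"] by auto
  qed
  have e1: "is_flip_pattern False True False" and e2: "is_flip_pattern False False True"
    using is_flip_pattern_rotate2[OF e0] is_flip_pattern_rotate[OF e0] by simp_all
  have "is_flip_pattern x False False" "is_flip_pattern False y False" "is_flip_pattern False False z"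
    using e0 e1 e2 is_flip_pattern_zero by (cases x; cases y; cases z; simp)+
  from is_flip_pattern_xor[OF is_flip_pattern_xor[OF this(1,2)] this(3)] show ?thesis by simp
qed

section \<open>The semidirect product decomposition\<close>

definition C where "C = (\<lambda>k. tau ^^ k) ` {..<3}"

lemma tau_pow_inj: "inj_on (\<lambda>k. tau ^^ k) {..<3}"
proof (rule inj_onI)
  fix i j assume "i \<in> {..<3}" "j \<in> {..<3}" "tau ^^ i = tau ^^ j"
  then show "i = j"
    using acts_as_pow[OF tau(1,2), of i] acts_as_pow[OF tau(1,2), of j] acts_as_unique by auto
qed

lemma subgroup_C: "subgroup C G" and C_iso: "subgroup_generated G C \<cong> integer_mod_group 3"
  using group.subgroup_powers[OF group_G tau(1), of 3]
    group.powers_iso_integer_mod_group[OF group_G tau(1), of 3] tau(3) tau_pow_inj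
  by (simp_all add: C_def)

lemma semidirect_H_C: "semidirect G H C"
  unfolding semidirect_def
proof (intro conjI normal_H subgroup_C)
  show "H \<inter> C = {\<one>\<^bsub>G\<^esub>}"
  proof (intro equalityI subsetI)
    fix g assume "g \<in> H \<inter> C"
    then obtain k where k: "k < 3" "g = tau ^^ k" "acts_as g 0"
      by (auto simp: C_def H_iff_acts_as_0)
    then have "k = 0" using acts_as_unique[of g k 0] acts_as_pow[OF tau(1,2), of k] by simp
    then show "g \<in> {\<one>\<^bsub>G\<^esub>}" using k by simp
  qed (auto simp: id_in_H C_def image_iff intro: bexI[of _ 0])
  show "H <#>\<^bsub>G\<^esub> C = carrier G"
  proof (intro equalityI subsetI)
    fix g assume "g \<in> H <#>\<^bsub>G\<^esub> C"
    then show "g \<in> carrier G"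
      using G_comp H_subset subgroup.mem_carrier[OF subgroup_C] by (auto simp: set_mult_def)
  next
    fix g assume g: "g \<in> carrier G"
    obtain j where j: "j < 3" "acts_as g j" using acts_as_exists[OF g] by blast
    have "acts_as (g \<circ> tau ^^ (3 - j)) (j + (3 - j))"
      by (rule acts_as_comp[OF j(2) acts_as_pow[OF tau(1,2)] G_pow[OF tau(1)]])
    then have "g \<circ> tau ^^ (3 - j) \<in> H"
      using j(1) acts_as_mod[of _ 3] G_comp[OF g G_pow[OF tau(1)]] by (simp add: H_iff_acts_as_0)
    moreover have "(g \<circ> tau ^^ (3 - j)) \<circ> tau ^^ j = g"
      using j(1) tau(3) by (simp add: o_assoc[symmetric] funpow_add[symmetric])
    moreover have "tau ^^ j \<in> C" using j(1) by (simp add: C_def)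
    ultimately show "g \<in> H <#>\<^bsub>G\<^esub> C"
      unfolding set_mult_def by (intro UN_I[of "g \<circ> tau ^^ (3 - j)"] UN_I[of "tau ^^ j"]) simp_all
  qed
qed

definition flip_vector :: "nat \<Rightarrow> ('a \<Rightarrow> 'a) \<Rightarrow> nat \<Rightarrow> int" where
  "flip_vector d r = (\<lambda>i\<in>{..<d}. if flips r i then 1 else 0)"

lemma carrier_subgroup_generated_H: "carrier (subgroup_generated G H) = H"
  by (rule subgroup.carrier_subgroup_generated_subgroup[OF subgroup_H])

lemma carrier_F2_power:
  "carrier (product_group {..<d} (\<lambda>_. integer_mod_group 2)) = (\<Pi>\<^sub>E i\<in>{..<d}. {0..<2})"
  by (simp add: carrier_integer_mod_group)

lemma flip_vector_hom:
  "flip_vector d \<in> hom (subgroup_generated G H) (product_group {..<d} (\<lambda>_. integer_mod_group 2))"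
proof (rule homI)
  fix r assume "r \<in> carrier (subgroup_generated G H)"
  then show "flip_vector d r \<in> carrier (product_group {..<d} (\<lambda>_. integer_mod_group 2))"
    by (simp add: carrier_F2_power flip_vector_def PiE_iff)
next
  fix r s assume "r \<in> carrier (subgroup_generated G H)" "s \<in> carrier (subgroup_generated G H)"
  then have "r \<in> H" "s \<in> H" by (simp_all add: carrier_subgroup_generated_H)
  then have "flip_vector d (r \<circ> s) i = (flip_vector d r i + flip_vector d s i) mod 2" if "i < d" for i
    using that H_comp(2) by (cases "flips r i"; cases "flips s i") (simp_all add: flip_vector_def)
  then show "flip_vector d (r \<otimes>\<^bsub>subgroup_generated G H\<^esub> s) =
      flip_vector d r \<otimes>\<^bsub>product_group {..<d} (\<lambda>_. integer_mod_group 2)\<^esub> flip_vector d s"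
    by (auto simp: flip_vector_def)
qed

lemma H_iso_F2_power:
  assumes inj: "\<And>r s. r \<in> H \<Longrightarrow> s \<in> H \<Longrightarrow> (\<forall>i<d. flips r i = flips s i) \<Longrightarrow> r = s"
    and surj: "\<And>b. \<exists>r\<in>H. \<forall>i<d. flips r i = b i"
  shows "subgroup_generated G H \<cong> product_group {..<d} (\<lambda>_. integer_mod_group 2)"
proof (rule is_isoI, rule isoI[OF flip_vector_hom])
  have "inj_on (flip_vector d) H"
  proof (rule inj_onI)
    fix r s assume rs: "r \<in> H" "s \<in> H" "flip_vector d r = flip_vector d s"
    have "flips r i = flips s i" if "i < d" for i
      using fun_cong[OF rs(3), of i] that by (simp add: flip_vector_def split: if_splits)
    then show "r = s" using inj[OF rs(1,2)] by simp
  qed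
  moreover have "flip_vector d ` H = (\<Pi>\<^sub>E i\<in>{..<d}. {0..<2})"
  proof (intro equalityI subsetI)
    fix f assume "f \<in> flip_vector d ` H"
    then show "f \<in> (\<Pi>\<^sub>E i\<in>{..<d}. {0..<2})" by (auto simp: flip_vector_def PiE_iff)
  next
    fix f :: "nat \<Rightarrow> int" assume f: "f \<in> (\<Pi>\<^sub>E i\<in>{..<d}. {0..<2})"
    obtain r where r: "r \<in> H" "\<forall>i<d. flips r i = (f i = 1)" using surj[of "\<lambda>i. f i = 1"] ..
    have "flip_vector d r = f"
    proof
      fix i show "flip_vector d r i = f i"
      proof (cases "i < d")
        case True
        then have "f i \<in> {0..<2}" using f by (auto simp: PiE_iff)
        then have "f i = 0 \<or> f i = 1" by auto
        then show ?thesis using True r(2) by (auto simp: flip_vector_def)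
      qed (use PiE_arb[OF f, of i] in \<open>simp add: flip_vector_def\<close>)
    qed
    then show "f \<in> flip_vector d ` H" using r(1) by blast
  qed
  ultimately show "bij_betw (flip_vector d) (carrier (subgroup_generated G H))
      (carrier (product_group {..<d} (\<lambda>_. integer_mod_group 2)))"
    unfolding bij_betw_def carrier_subgroup_generated_H carrier_F2_power by (rule conjI)
qed

lemma AS_indep_iff: "AS_indep L (\<lambda>i. (\<sigma> ^^ i) a) S \<longleftrightarrow> (\<forall>T\<subseteq>S. T \<noteq> {} \<longrightarrow> \<not> AS_relation T)"
  by (simp add: AS_indep_def AS_relation_def)

lemma AS_indep_of_nonrelations:
  assumes S: "S \<subseteq> {0, 1, 2}"
    and nonrel: "\<And>T. T \<in> {{0}, {1}, {2}, {0, 1}, {0, 2}, {1, 2}, {0, 1, 2}} \<Longrightarrow> T \<subseteq> S \<Longrightarrow> \<not> AS_relation T"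
  shows "AS_indep L (\<lambda>i. (\<sigma> ^^ i) a) S"
  unfolding AS_indep_iff
proof (intro allI impI)
  fix T assume T: "T \<subseteq> S" "T \<noteq> {}"
  have "T \<subseteq> {0, 1, 2}" using T(1) S by (rule subset_trans)
  then have "T \<in> {{}, {0}, {1}, {2}, {0, 1}, {0, 2}, {1, 2}, {0, 1, 2}}" by (rule subsets_of_three)
  then have "T \<in> {{0}, {1}, {2}, {0, 1}, {0, 2}, {1, 2}, {0, 1, 2}}"
    using T(2) by (simp only: insert_iff[of T "{}"] simp_thms)
  then show "\<not> AS_relation T" using T(1) by (rule nonrel)
qed

lemma AS_indep_no_relation_subset:
  "AS_indep L (\<lambda>i. (\<sigma> ^^ i) a) S \<Longrightarrow> AS_relation T \<Longrightarrow> T \<noteq> {} \<Longrightarrow> \<not> T \<subseteq> S"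
  unfolding AS_indep_iff by blast

abbreviation rank_a where "rank_a \<equiv> AS_rank L (\<lambda>i. (\<sigma> ^^ i) a) {0, 1, 2}"

lemma rank_if_pair_relation:
  assumes rel: "AS_relation {0, 1}"
  shows "rank_a = 1"
proof (rule AS_rank_eqI[of _ "{0}"])
  show "AS_indep L (\<lambda>i. (\<sigma> ^^ i) a) {0}"
  proof (rule AS_indep_of_nonrelations)
    fix T :: "nat set" assume "T \<in> {{0}, {1}, {2}, {0, 1}, {0, 2}, {1, 2}, {0, 1, 2}}" "T \<subseteq> {0}"
    then show "\<not> AS_relation T" using not_AS_relation_0 by (elim insertE emptyE) auto
  qed simp
  fix S assume S: "S \<subseteq> {0, 1, 2}" and indep: "AS_indep L (\<lambda>i. (\<sigma> ^^ i) a) S"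
  have "\<not> {0, 1} \<subseteq> S" "\<not> {0, 2} \<subseteq> S" "\<not> {1, 2} \<subseteq> S"
    using AS_indep_no_relation_subset[OF indep _ insert_not_empty] rel AS_relations(3,4) by blast+
  then show "card S \<le> 1" using subsets_of_three[OF S] by auto
qed simp_all

lemma H_iso_if_pair_relation:
  assumes rel: "AS_relation {0, 1}"
  shows "subgroup_generated G H \<cong> product_group {..<1::nat} (\<lambda>_. integer_mod_group 2)"
proof (rule H_iso_F2_power)
  have same: "flips r k = flips r 0" if "r \<in> H" "k < 3" for r k
    using H_flips_pair[OF that(1) rel]
      H_flips_pair[OF that(1) AS_relations(4)[OF AS_relations(3)[OF rel]]]
      less_3_cases[OF that(2)] by auto
  fix r s assume rs: "r \<in> H" "s \<in> H" "\<forall>i<1. flips r i = flips s i"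
  show "r = s"
  proof (rule H_eqI[OF rs(1,2)])
    fix k :: nat assume "k < 3"
    then show "flips r k = flips s k"
      using same[OF rs(1) \<open>k < 3\<close>] same[OF rs(2) \<open>k < 3\<close>] rs(3) by simp
  qed
next
  fix b :: "nat \<Rightarrow> bool"
  obtain r where r: "r \<in> H" "odd (card {i \<in> {0}. flips r i})"
    by (rule nonrelation_odd_flips[OF _ not_AS_relation_0]) simp
  then have "flips r 0" using odd_card_filter_singleton[of 0 "flips r"] by simp
  show "\<exists>r\<in>H. \<forall>i<1. flips r i = b i"
  proof (cases "b 0")
    case True
    then show ?thesis using r(1) \<open>flips r 0\<close> by (intro bexI[of _ r]) auto
  next
    case False
    then show ?thesis using id_in_H by (intro bexI[of _ id]) (auto simp: flips_def)
  qed
qed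

lemma rank_if_triple_relation:
  assumes nonrel: "\<not> AS_relation {0, 1}" and rel: "AS_relation {0, 1, 2}"
  shows "rank_a = 2"
proof (rule AS_rank_eqI[of _ "{0, 1}"])
  show "AS_indep L (\<lambda>i. (\<sigma> ^^ i) a) {0, 1}"
  proof (rule AS_indep_of_nonrelations)
    fix T :: "nat set" assume "T \<in> {{0}, {1}, {2}, {0, 1}, {0, 2}, {1, 2}, {0, 1, 2}}" "T \<subseteq> {0, 1}"
    then show "\<not> AS_relation T"
      using not_AS_relation_0 AS_relations(1) nonrel by (elim insertE emptyE) auto
  qed simp
  fix S assume S: "S \<subseteq> {0, 1, 2}" and "AS_indep L (\<lambda>i. (\<sigma> ^^ i) a) S"
  then have "S \<noteq> {0, 1, 2}" using AS_indep_no_relation_subset[OF _ rel] by blast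
  then show "card S \<le> 2" using subsets_of_three[OF S] by auto
qed simp_all

lemma H_iso_if_triple_relation:
  assumes rel: "AS_relation {0, 1, 2}"
  shows "subgroup_generated G H \<cong> product_group {..<2::nat} (\<lambda>_. integer_mod_group 2)"
proof (rule H_iso_F2_power)
  fix r s assume rs: "r \<in> H" "s \<in> H" "\<forall>i<2. flips r i = flips s i"
  show "r = s"
  proof (rule H_eqI[OF rs(1,2)])
    fix k :: nat assume "k < 3"
    then show "flips r k = flips s k"
      using H_flips_triple[OF rs(1) rel] H_flips_triple[OF rs(2) rel] rs(3)
      by (auto dest!: less_3_cases)
  qed
next
  fix b :: "nat \<Rightarrow> bool"
  obtain r where "r \<in> H" "flips r 0 = b 0" "flips r 1 = b 1"
    using is_flip_pattern_even[OF rel, of "b 0" "b 1"] by (rule is_flip_patternE)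
  then show "\<exists>r\<in>H. \<forall>i<2. flips r i = b i" by (auto simp: less_2_cases_iff)
qed

lemma rank_if_no_relation:
  assumes nonrel: "\<not> AS_relation {0, 1}" "\<not> AS_relation {0, 1, 2}"
  shows "rank_a = 3"
proof (rule AS_rank_eqI[of _ "{0, 1, 2}"])
  show "AS_indep L (\<lambda>i. (\<sigma> ^^ i) a) {0, 1, 2}"
  proof (rule AS_indep_of_nonrelations)
    fix T :: "nat set" assume "T \<in> {{0}, {1}, {2}, {0, 1}, {0, 2}, {1, 2}, {0, 1, 2}}"
    moreover have "\<not> AS_relation {0, 2}" "\<not> AS_relation {1, 2}"
      using AS_relations(4,5) nonrel(1) by blast+
    ultimately show "\<not> AS_relation T"
      using not_AS_relation_0 AS_relations(1,2) nonrel by (elim insertE emptyE) auto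
  qed simp
  fix S assume "S \<subseteq> {0, 1, 2::nat}"
  then show "card S \<le> 3" using card_mono[of "{0, 1, 2::nat}" S] by simp
qed simp_all

lemma H_iso_if_no_relation:
  assumes nonrel: "\<not> AS_relation {0, 1}" "\<not> AS_relation {0, 1, 2}"
  shows "subgroup_generated G H \<cong> product_group {..<3::nat} (\<lambda>_. integer_mod_group 2)"
proof (rule H_iso_F2_power)
  fix r s assume rs: "r \<in> H" "s \<in> H" "\<forall>i<3. flips r i = flips s i"
  show "r = s" by (rule H_eqI[OF rs(1,2)]) (use rs(3) in blast)
next
  fix b :: "nat \<Rightarrow> bool"
  obtain r where "r \<in> H" "flips r 0 = b 0" "flips r 1 = b 1" "flips r 2 = b 2"
    using is_flip_pattern_all[OF nonrel, of "b 0" "b 1" "b 2"] by (rule is_flip_patternE)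
  then show "\<exists>r\<in>H. \<forall>i<3. flips r i = b i" by (auto dest!: less_3_cases)
qed

lemma H_iso_F2_rank: "subgroup_generated G H \<cong> product_group {..<rank_a} (\<lambda>_. integer_mod_group 2)"
proof (cases "AS_relation {0, 1}")
  case pair: True
  show ?thesis unfolding rank_if_pair_relation[OF pair] by (rule H_iso_if_pair_relation[OF pair])
next
  case no_pair: False
  show ?thesis
  proof (cases "AS_relation {0, 1, 2}")
    case True
    show ?thesis unfolding rank_if_triple_relation[OF no_pair True]
      by (rule H_iso_if_triple_relation[OF True])
  next
    case False
    show ?thesis unfolding rank_if_no_relation[OF no_pair False]
      by (rule H_iso_if_no_relation[OF no_pair False])
  qed
qed

theorem Gal_semidirect_product:
  "\<exists>H C. semidirect G H C \<and>
     subgroup_generated G H \<cong> product_group {..<rank_a} (\<lambda>_. integer_mod_group 2) \<and>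
     subgroup_generated G C \<cong> integer_mod_group 3"
  using semidirect_H_C H_iso_F2_rank C_iso by blast

end

theorem mainTheorem3:
  fixes K L M N :: "'a::field set" and \<sigma> :: "'a \<Rightarrow> 'a" and a :: 'a and d :: nat
  assumes char2: "(2::'a) = 0"
    and KL: "galois_ext L K" and GLK: "Gal L K \<cong> integer_mod_group 3"
    and LM: "galois_ext M L" and GML: "Gal M L \<cong> integer_mod_group 2"
    and sigma: "\<sigma> \<in> carrier (Gal L K)"
    and sigma_gen: "generate (Gal L K) {\<sigma>} = carrier (Gal L K)"
    and aL: "a \<in> L"
    and Ma: "\<exists>\<alpha>\<in>M. \<alpha> ^ 2 - \<alpha> = a \<and> M = {l + m * \<alpha> | l m. l \<in> L \<and> m \<in> L}"
    and d: "d = AS_rank L (\<lambda>i. (\<sigma> ^^ i) a) {0, 1, 2}"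
    and N: "galois_closure N M K"
  shows "\<exists>H C. semidirect (Gal N K) H C \<and>
           subgroup_generated (Gal N K) H \<cong> product_group {..<d} (\<lambda>_. integer_mod_group 2) \<and>
           subgroup_generated (Gal N K) C \<cong> integer_mod_group 3"
proof -
  interpret AS_tower K L M N \<sigma> a
    by unfold_locales (fact assms)+
  show ?thesis unfolding d by (rule Gal_semidirect_product)
qed

end
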